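(* Let $\Omega\subset\mathbb{R}^m$ be open, bounded and connected, with boundary $\partial\Omega$ and unit normal $\boldsymbol{n}$. Let $p_0$ be a probability density on $\Omega$, let $\sigma(x,t)$ be a (diffusion) coefficient, and let $\alpha(x,t)$ be a design coefficient with $\inf_{x\in\Omega,t\ge0}\alpha(x,t)>0$ and $\sup_{x\in\Omega,t\ge0}\alpha(x,t)<\infty$. Let $(p_{\mathrm r},v_{\mathrm r})$ be a reference density and velocity field satisfying $$\partial_t p_{\mathrm r}=-\nabla\cdot(v_{\mathrm r}p_{\mathrm r})\ \text{in }\Omega\times(0,\infty),\qquad p_{\mathrm r}=p_0\ \text{on }\Omega\times\{0\},\qquad v_{\mathrm r}p_{\mathrm r}\cdot\boldsymbol{n}=0\ \text{on }\partial\Omega\times(0,\infty).$$ Consider the Fokker–Planck system $$\partial_t p=-\nabla\cdot(vp)+\Delta(\sigma p)\ \text{in }\Omega\times(0,\infty),\qquad p=p_0\ \text{on }\Omega\times\{0\},\qquad \boldsymbol{n}\cdot(\nabla(\sigma p)-vp)=0\ \text{on }\partial\Omega\times(0,\infty),$$ with the feedback law $$v=-\frac{\alpha(x,t)\nabla(p-p_{\mathrm r})-\nabla(\sigma p)-v_{\mathrm r}p_{\mathrm r}}{p}.$$ If the solution satisfies $p>0$, then the tracking error $\Phi:=p-p_{\mathrm r}$ satisfies $\|\Phi(\cdot,t)\|_{L^2(\Omega)}\to0$ exponentially as $t\to\infty$.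
   Context: $p(x,t)$ models the density of a robotic swarm whose members follow $dX_i=v(X_i,t)dt+\sqrt{2\sigma(X_i,t)}\,dB_t$; $\nabla\cdot$ denotes divergence and $\Delta$ the Laplacian in $x$. $L^2(\Omega)$ is the usual Lebesgue space with norm $\|f\|_{L^2(\Omega)}=(\int_\Omega|f|^2dx)^{1/2}$. *)

theory Defs
  imports "HOL-Analysis.Analysis"
begin

definition grad :: "('a::euclidean_space \<Rightarrow> real) \<Rightarrow> 'a \<Rightarrow> 'a" where
  "grad f x = (\<Sum>i\<in>Basis. frechet_derivative f (at x) i *\<^sub>R i)"

definition divg :: "('a::euclidean_space \<Rightarrow> 'a) \<Rightarrow> 'a \<Rightarrow> real" where
  "divg F x = (\<Sum>i\<in>Basis. frechet_derivative F (at x) i \<bullet> i)"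

definition lap :: "('a::euclidean_space \<Rightarrow> real) \<Rightarrow> 'a \<Rightarrow> real" where
  "lap f x = divg (grad f) x"

definition C1_on :: "('a::real_normed_vector \<Rightarrow> 'b::real_normed_vector) \<Rightarrow> 'a set \<Rightarrow> bool" where
  "C1_on f S \<longleftrightarrow> (\<forall>z\<in>S. f differentiable (at z)) \<and>
     (\<forall>h. continuous_on S (\<lambda>z. frechet_derivative f (at z) h))"

text \<open>A bounded C^1 domain given by a global C^1 defining function g:
  Omega = {g < 0}, with nonvanishing gradient on {g = 0}; unit outward normal grad g / |grad g|.\<close>

definition C1_domain :: "'a::euclidean_space set \<Rightarrow> ('a \<Rightarrow> real) \<Rightarrow> bool" where
  "C1_domain \<Omega> g \<longleftrightarrow> C1_on g UNIV \<and> \<Omega> = {x. g x < 0} \<and> (\<forall>x. g x = 0 \<longrightarrow> grad g x \<noteq> 0)"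

definition unit_normal :: "('a::euclidean_space \<Rightarrow> real) \<Rightarrow> 'a \<Rightarrow> 'a" where
  "unit_normal g x = grad g x /\<^sub>R norm (grad g x)"

definition unc :: "('a \<Rightarrow> real \<Rightarrow> 'b) \<Rightarrow> 'a \<times> real \<Rightarrow> 'b" where
  "unc f z = f (fst z) (snd z)"

definition L2norm :: "'a::euclidean_space set \<Rightarrow> ('a \<Rightarrow> real) \<Rightarrow> real" where
  "L2norm \<Omega> f = sqrt (integral \<Omega> (\<lambda>x. (f x)\<^sup>2))"

end

theory Submission
  imports Defs
begin

text \<open>Subtracting the equation of the reference pair from the closed-loop Fokker--Planck
  equation, the feedback law cancels both the drift and the diffusion of the swarm: the tracking
  error \<open>\<Phi> = p - p\<^sub>r\<close> solves the linear Neumann problem \<open>\<Phi>\<^sub>t = \<nabla>\<cdot>(\<alpha> \<nabla>\<Phi>)\<close> in \<open>\<Omega>\<close>,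
  \<open>\<nabla>\<Phi> \<cdot> \<nabla>g = 0\<close> on \<open>\<partial>\<Omega>\<close>, and \<open>\<Phi>(\<cdot>, 0) = 0\<close> because both densities start from \<open>p\<^sub>0\<close>.
  A weak maximum principle for this problem, applied to \<open>\<Phi>\<close> and \<open>-\<Phi>\<close>, gives \<open>\<Phi> = 0\<close>, so the
  exponential bound holds with \<open>C = 0\<close>.

  The maximum principle is proved by perturbation: for \<open>\<epsilon> > 0\<close> the function
  \<open>\<Phi> - \<epsilon> k - \<epsilon> M (t - \<tau>)\<close> cannot attain its maximum over \<open>closure \<Omega> \<times> [\<tau>, T]\<close> at a time
  \<open>t > \<tau>\<close>, neither in the interior (second-derivative test for the divergence-form operator) nor
  on the boundary, where the barrier \<open>k\<close> increases in the outward direction \<open>\<nabla>g\<close>; then let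
  \<open>\<epsilon> \<rightarrow> 0\<close> and \<open>\<tau> \<rightarrow> 0\<close>. Since \<open>g\<close> is only \<open>C\<^sup>1\<close>, the barrier is a mollification of \<open>g\<close>.\<close>

lemma grad_eqI:
  fixes f :: "'a::euclidean_space \<Rightarrow> real"
  assumes "(f has_derivative (\<lambda>v. G \<bullet> v)) (at x)"
  shows "grad f x = G"
  using frechet_derivative_at[OF assms, symmetric] by (simp add: grad_def euclidean_representation)

lemma has_derivative_grad:
  fixes f :: "'a::euclidean_space \<Rightarrow> real"
  assumes "f differentiable (at x)"
  shows "(f has_derivative (\<lambda>v. grad f x \<bullet> v)) (at x)"
proof -
  let ?f' = "frechet_derivative f (at x)"
  have f': "(f has_derivative ?f') (at x)"
    using assms frechet_derivative_works by blast
  have "?f' v = grad f x \<bullet> v" for v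
  proof -
    have "?f' v = ?f' (\<Sum>i\<in>Basis. (v \<bullet> i) *\<^sub>R i)"
      by (simp add: euclidean_representation)
    also have "\<dots> = (\<Sum>i\<in>Basis. (v \<bullet> i) * ?f' i)"
      using has_derivative_linear[OF f'] by (simp add: linear_sum linear.scaleR)
    also have "\<dots> = grad f x \<bullet> v"
      by (simp add: grad_def inner_sum_right inner_commute mult.commute)
    finally show ?thesis .
  qed
  then have "?f' = (\<lambda>v. grad f x \<bullet> v)"
    by auto
  with f' show ?thesis
    by simp
qed

lemma grad_diff:
  fixes f g :: "'a::euclidean_space \<Rightarrow> real"
  assumes "f differentiable (at x)" "g differentiable (at x)"
  shows "grad (\<lambda>y. f y - g y) x = grad f x - grad g x"
  using has_derivative_diff[OF assms[THEN has_derivative_grad]]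
  by (intro grad_eqI) (simp add: inner_diff_left)

lemma grad_minus:
  fixes f :: "'a::euclidean_space \<Rightarrow> real"
  assumes "f differentiable (at x)"
  shows "grad (\<lambda>y. - f y) x = - grad f x"
  using has_derivative_minus[OF assms[THEN has_derivative_grad]] by (intro grad_eqI) simp

lemma grad_mult:
  fixes f g :: "'a::euclidean_space \<Rightarrow> real"
  assumes "f differentiable (at x)" "g differentiable (at x)"
  shows "grad (\<lambda>y. f y * g y) x = f x *\<^sub>R grad g x + g x *\<^sub>R grad f x"
  using has_derivative_mult[OF assms[THEN has_derivative_grad]]
  by (intro grad_eqI) (simp add: inner_add_left algebra_simps)

lemma divg_eq:
  assumes "(F has_derivative F') (at x)"
  shows "divg F x = (\<Sum>i\<in>Basis. F' i \<bullet> i)"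
  using frechet_derivative_at[OF assms] by (simp add: divg_def)

lemma divg_cong_open:
  assumes "open S" "x \<in> S" "\<And>y. y \<in> S \<Longrightarrow> F y = F' y"
  shows "divg F x = divg F' x"
proof -
  have "(F has_derivative D) (at x) \<longleftrightarrow> (F' has_derivative D) (at x)" for D
    using has_derivative_transform_within_open[of F D x UNIV S F']
      has_derivative_transform_within_open[of F' D x UNIV S F] assms by auto
  then show ?thesis
    by (simp add: divg_def frechet_derivative_def)
qed

lemma divg_add:
  assumes "F differentiable (at x)" "G differentiable (at x)"
  shows "divg (\<lambda>y. F y + G y) x = divg F x + divg G x"
proof -
  obtain F' G' where F': "(F has_derivative F') (at x)" and G': "(G has_derivative G') (at x)"
    using assms by (auto simp: differentiable_def)
  show ?thesis
    using divg_eq[OF has_derivative_add[OF F' G']] divg_eq[OF F'] divg_eq[OF G']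
    by (simp add: inner_add_left sum.distrib)
qed

lemma divg_minus:
  assumes "F differentiable (at x)"
  shows "divg (\<lambda>y. - F y) x = - divg F x"
proof -
  obtain F' where F': "(F has_derivative F') (at x)"
    using assms by (auto simp: differentiable_def)
  show ?thesis
    using divg_eq[OF has_derivative_minus[OF F']] divg_eq[OF F'] by (simp add: sum_negf)
qed

lemma divg_diff:
  assumes "F differentiable (at x)" "G differentiable (at x)"
  shows "divg (\<lambda>y. F y - G y) x = divg F x - divg G x"
  using divg_add[of F x "\<lambda>y. - G y"] divg_minus[of G x] assms by (simp add: differentiable_minus)

lemma differentiable_transform_open:
  assumes "f differentiable (at x)" "open S" "x \<in> S" "\<And>y. y \<in> S \<Longrightarrow> f y = g y"
  shows "g differentiable (at x)"
  using assms has_derivative_transform_within_open[of f _ x UNIV S g]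
  unfolding differentiable_def by auto

lemma C1_on_UNIV_grad:
  fixes g :: "'a::euclidean_space \<Rightarrow> real"
  assumes "C1_on g UNIV"
  shows "(g has_derivative (\<lambda>v. grad g x \<bullet> v)) (at x)" and "continuous_on UNIV (grad g)"
    and "continuous_on UNIV g"
proof -
  have diff: "(g has_derivative (\<lambda>v. grad g x \<bullet> v)) (at x)" for x
    using assms by (intro has_derivative_grad) (simp add: C1_on_def)
  then show "(g has_derivative (\<lambda>v. grad g x \<bullet> v)) (at x)" .
  have "continuous_on UNIV (\<lambda>x. frechet_derivative g (at x) i)" for i
    using assms by (simp add: C1_on_def)
  then show "continuous_on UNIV (grad g)"
    unfolding grad_def[abs_def] by (intro continuous_intros)
  have "isCont g x" for x
    by (rule has_derivative_continuous[OF diff])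
  then show "continuous_on UNIV g"
    by (simp add: continuous_at_imp_continuous_on)
qed

lemma has_derivative_slice:
  fixes H :: "'a::real_normed_vector \<times> real \<Rightarrow> 'b::real_normed_vector"
  assumes "H differentiable (at (x, t))"
  shows "((\<lambda>y. H (y, t)) has_derivative (\<lambda>v. frechet_derivative H (at (x, t)) (v, 0))) (at x)"
proof -
  have "((\<lambda>y. (y, t)) has_derivative (\<lambda>v. (v, 0))) (at x)"
    by (auto intro!: derivative_eq_intros)
  from has_derivative_compose[OF this frechet_derivative_works[THEN iffD1, OF assms]]
  show ?thesis
    by simp
qed

lemma C1_on_slice_differentiable:
  fixes H :: "'a::real_normed_vector \<times> real \<Rightarrow> 'b::real_normed_vector"
  assumes "C1_on H (S \<times> {0<..})" "x \<in> S" "0 < t"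
  shows "(\<lambda>y. H (y, t)) differentiable (at x)"
proof -
  have "H differentiable (at (x, t))"
    using assms by (simp add: C1_on_def)
  from has_derivative_slice[OF this] show ?thesis
    unfolding differentiable_def by blast
qed

lemma C1_on_bounded_on_compact:
  fixes H :: "'a::real_normed_vector \<Rightarrow> real"
  assumes H: "C1_on H S" and "compact K" "K \<subseteq> S" "finite V"
  obtains M where "\<And>z. z \<in> K \<Longrightarrow> \<bar>H z\<bar> \<le> M"
    "\<And>z v. z \<in> K \<Longrightarrow> v \<in> V \<Longrightarrow> \<bar>frechet_derivative H (at z) v\<bar> \<le> M"
proof -
  have "isCont H z" if "z \<in> K" for z
  proof -
    have "H differentiable (at z)"
      using H that \<open>K \<subseteq> S\<close> by (auto simp: C1_on_def)
    then show ?thesis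
      by (rule differentiable_imp_continuous_within)
  qed
  then have "continuous_on K H"
    by (simp add: continuous_at_imp_continuous_on)
  moreover have "continuous_on K (\<lambda>z. frechet_derivative H (at z) v)" for v
  proof -
    have "continuous_on S (\<lambda>z. frechet_derivative H (at z) v)"
      using H by (simp add: C1_on_def)
    then show ?thesis
      using \<open>K \<subseteq> S\<close> by (rule continuous_on_subset)
  qed
  ultimately have "compact (H ` K \<union> (\<Union>v\<in>V. (\<lambda>z. frechet_derivative H (at z) v) ` K))"
    using \<open>compact K\<close> \<open>finite V\<close> by (intro compact_Un compact_UN compact_continuous_image)
  then have "bounded (H ` K \<union> (\<Union>v\<in>V. (\<lambda>z. frechet_derivative H (at z) v) ` K))"
    by (rule compact_imp_bounded)
  then obtain M where M: "\<forall>y \<in> H ` K \<union> (\<Union>v\<in>V. (\<lambda>z. frechet_derivative H (at z) v) ` K). norm y \<le> M"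
    unfolding bounded_iff by blast
  show ?thesis
  proof (rule that)
    show "\<bar>H z\<bar> \<le> M" if "z \<in> K" for z
      using M that by auto
    show "\<bar>frechet_derivative H (at z) v\<bar> \<le> M" if "z \<in> K" "v \<in> V" for z v
      using M that by auto
  qed
qed

lemma has_real_derivative_line:
  fixes f :: "'a::real_normed_vector \<Rightarrow> real"
  assumes "(f has_derivative f') (at (x + s *\<^sub>R v))"
  shows "((\<lambda>s. f (x + s *\<^sub>R v)) has_real_derivative f' v) (at s)"
proof -
  have "((\<lambda>s. x + s *\<^sub>R v) has_derivative (\<lambda>s. s *\<^sub>R v)) (at s)"
    by (auto intro!: derivative_eq_intros)
  from has_derivative_compose[OF this assms]
  have "((\<lambda>s. f (x + s *\<^sub>R v)) has_derivative (\<lambda>s'. f' (s' *\<^sub>R v))) (at s)" .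
  moreover have "(\<lambda>s'. f' (s' *\<^sub>R v)) = (\<lambda>s'. f' v * s')"
    using linear.scaleR[OF has_derivative_linear[OF assms]] by (auto simp: mult.commute)
  ultimately show ?thesis
    by (simp add: has_field_derivative_def)
qed

lemma has_real_derivative_line_0:
  fixes f :: "'a::real_normed_vector \<Rightarrow> real"
  assumes "(f has_derivative f') (at x)"
  shows "((\<lambda>s. f (x + s *\<^sub>R v)) has_real_derivative f' v) (at 0)"
  using has_real_derivative_line[of f f' x 0 v] assms by simp

lemma has_real_derivative_line_shift:
  fixes k :: "'a::real_vector \<Rightarrow> real"
  assumes "\<And>x. ((\<lambda>s. k (x + s *\<^sub>R v)) has_real_derivative kd x) (at 0)"
  shows "((\<lambda>s. k (x + s *\<^sub>R v)) has_real_derivative kd (x + s0 *\<^sub>R v)) (at s0)"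
proof -
  have "(\<lambda>s. k (x + (s + s0) *\<^sub>R v)) = (\<lambda>s. k (x + s0 *\<^sub>R v + s *\<^sub>R v))"
    by (simp add: scaleR_add_left algebra_simps)
  then have "((\<lambda>s. k (x + (s + s0) *\<^sub>R v)) has_real_derivative kd (x + s0 *\<^sub>R v)) (at 0)"
    using assms by simp
  then show ?thesis
    using DERIV_shift[of "\<lambda>s. k (x + s *\<^sub>R v)" _ 0 s0] by simp
qed

lemma DERIV_nonneg_at_left_max:
  fixes f :: "real \<Rightarrow> real"
  assumes f: "(f has_real_derivative D) (at t)" and "a < t"
    and max: "\<And>s. a \<le> s \<Longrightarrow> s \<le> t \<Longrightarrow> f s \<le> f t"
  shows "0 \<le> D"
proof (rule ccontr)
  assume "\<not> 0 \<le> D"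
  then obtain d where "0 < d" and dec: "\<And>h. 0 < h \<Longrightarrow> h < d \<Longrightarrow> f t < f (t - h)"
    using DERIV_neg_dec_left[OF f] by force
  define h where "h = min d (t - a) / 2"
  have "0 < h" "h < d" "h \<le> t - a"
    using \<open>0 < d\<close> \<open>a < t\<close> by (auto simp: h_def)
  then show False
    using dec[of h] max[of "t - h"] by auto
qed

text \<open>The one-dimensional core of the second-derivative test for the divergence-form
  operator \<open>\<nabla>\<cdot>(\<alpha> \<nabla>u)\<close>.\<close>

lemma DERIV_weighted_slope_nonpos_at_max:
  fixes f f' w :: "real \<Rightarrow> real"
  assumes "0 < r"
    and f': "\<And>s. \<bar>s\<bar> < r \<Longrightarrow> (f has_real_derivative f' s) (at s)"
    and max: "\<And>s. \<bar>s\<bar> < r \<Longrightarrow> f s \<le> f 0"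
    and w: "\<And>s. \<bar>s\<bar> < r \<Longrightarrow> 0 < w s"
    and D: "((\<lambda>s. w s * f' s) has_real_derivative D) (at 0)"
  shows "D \<le> 0"
proof (rule ccontr)
  assume "\<not> D \<le> 0"
  have "f' 0 = 0"
    using DERIV_local_max[OF f'[of 0] \<open>0 < r\<close>] max \<open>0 < r\<close> by auto
  with \<open>\<not> D \<le> 0\<close> obtain d where "0 < d" and inc: "\<And>h. 0 < h \<Longrightarrow> h < d \<Longrightarrow> 0 < w h * f' h"
    using DERIV_pos_inc_right[OF D] by force
  define s where "s = min d r / 2"
  have s: "0 < s" "s < d" "s < r"
    using \<open>0 < d\<close> \<open>0 < r\<close> by (auto simp: s_def)
  obtain z where z: "0 < z" "z < s" "f s - f 0 = (s - 0) * f' z"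
    using MVT2[of 0 s f f'] s f' by force
  have "0 < f' z"
    using inc[of z] w[of z] z s by (simp add: zero_less_mult_iff)
  then have "0 < s * f' z"
    using s by simp
  with z have "f 0 < f s"
    by simp
  with max[of s] s show False
    by simp
qed

lemma DERIV_max0_power:
  fixes w :: real
  assumes "0 < n"
  shows "((\<lambda>w. (max 0 w) ^ Suc n) has_real_derivative real (Suc n) * (max 0 w) ^ n) (at w)"
proof (cases w "0::real" rule: linorder_cases)
  case less
  have "((\<lambda>w::real. 0) has_real_derivative 0) (at w)"
    by simp
  then have "((\<lambda>w. (max 0 w) ^ Suc n) has_real_derivative 0) (at w)"
    by (rule has_field_derivative_transform_within_open[where S="{..<0}"]) (use less in auto)
  then show ?thesis
    using less assms by (simp add: power_0_left)
next
  case equal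
  have "((\<lambda>y::real. max 0 y) \<longlongrightarrow> max 0 0) (at 0)"
    by (intro tendsto_intros)
  from tendsto_power[OF this, of n]
  have "((\<lambda>y::real. (max 0 y) ^ n) \<longlongrightarrow> 0) (at 0)"
    using assms by (simp add: power_0_left)
  moreover have "\<forall>\<^sub>F y in at (0::real). (max 0 y) ^ n = ((max 0 y) ^ Suc n - (max 0 0) ^ Suc n) / (y - 0)"
    using assms by (auto simp: eventually_at_filter max_def)
  ultimately have "((\<lambda>y::real. ((max 0 y) ^ Suc n - (max 0 0) ^ Suc n) / (y - 0)) \<longlongrightarrow> 0) (at 0)"
    using Lim_transform_eventually by fastforce
  then show ?thesis
    using equal assms by (simp add: has_field_derivative_iff power_0_left)
next
  case greater
  have "((\<lambda>w. w ^ Suc n) has_real_derivative real (Suc n) * w ^ n) (at w)"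
    using DERIV_pow[of "Suc n" w] by simp
  then have "((\<lambda>w. (max 0 w) ^ Suc n) has_real_derivative real (Suc n) * w ^ n) (at w)"
    by (rule has_field_derivative_transform_within_open[where S="{0<..}"]) (use greater in auto)
  then show ?thesis
    using greater by simp
qed

section \<open>A mollified barrier\<close>

definition bump :: "real \<Rightarrow> 'a::real_inner \<Rightarrow> real" where
  "bump h y = (max 0 (h\<^sup>2 - y \<bullet> y)) ^ 3"

definition bump_deriv :: "real \<Rightarrow> 'a::real_inner \<Rightarrow> 'a \<Rightarrow> real" where
  "bump_deriv h y v = - 6 * (max 0 (h\<^sup>2 - y \<bullet> y))\<^sup>2 * (y \<bullet> v)"

definition bump_deriv2 :: "real \<Rightarrow> 'a::real_inner \<Rightarrow> 'a \<Rightarrow> real" where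
  "bump_deriv2 h y v = 24 * max 0 (h\<^sup>2 - y \<bullet> y) * (y \<bullet> v)\<^sup>2 - 6 * (max 0 (h\<^sup>2 - y \<bullet> y))\<^sup>2 * (v \<bullet> v)"

lemma has_real_derivative_bump_base:
  "((\<lambda>s. h\<^sup>2 - (y + s *\<^sub>R v) \<bullet> (y + s *\<^sub>R v)) has_real_derivative - 2 * ((y + s *\<^sub>R v) \<bullet> v)) (at s)"
  by (auto intro!: derivative_eq_intros simp: algebra_simps inner_commute)

lemma bump_line_deriv:
  "((\<lambda>s. bump h (y + s *\<^sub>R v)) has_real_derivative bump_deriv h (y + s *\<^sub>R v) v) (at s)"
proof -
  have "((\<lambda>w. (max 0 w) ^ 3) has_real_derivative 3 * (max 0 w)\<^sup>2) (at w)" for w :: real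
    using DERIV_max0_power[of 2 w] by (simp add: numeral_eq_Suc)
  from DERIV_chain2[OF this has_real_derivative_bump_base[of h y v s]] show ?thesis
    unfolding bump_def bump_deriv_def by (rule DERIV_cong) (simp add: algebra_simps)
qed

lemma bump_deriv_line_deriv:
  "((\<lambda>s. bump_deriv h (y + s *\<^sub>R v) v) has_real_derivative bump_deriv2 h (y + s *\<^sub>R v) v) (at s)"
proof -
  have "((\<lambda>w. (max 0 w)\<^sup>2) has_real_derivative 2 * max 0 w) (at w)" for w :: real
    using DERIV_max0_power[of 1 w] by (simp add: numeral_eq_Suc)
  from DERIV_chain2[OF this has_real_derivative_bump_base[of h y v s]]
  have sq: "((\<lambda>s. (max 0 (h\<^sup>2 - (y + s *\<^sub>R v) \<bullet> (y + s *\<^sub>R v)))\<^sup>2) has_real_derivative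
      2 * max 0 (h\<^sup>2 - (y + s *\<^sub>R v) \<bullet> (y + s *\<^sub>R v)) * (- 2 * ((y + s *\<^sub>R v) \<bullet> v))) (at s)"
    by simp
  have lin: "((\<lambda>s. (y + s *\<^sub>R v) \<bullet> v) has_real_derivative v \<bullet> v) (at s)"
    by (auto intro!: derivative_eq_intros simp: inner_add_left)
  show ?thesis
    unfolding bump_deriv_def bump_deriv2_def
    by (rule DERIV_cong[OF DERIV_mult'[OF DERIV_cmult[OF sq, of "-6"] lin]])
      (simp add: power2_eq_square algebra_simps)
qed

lemma continuous_on_bump [continuous_intros]:
  "continuous_on S (bump h)" "continuous_on S (\<lambda>y. bump_deriv h y v)"
  "continuous_on S (\<lambda>y. bump_deriv2 h y v)"
  unfolding bump_def bump_deriv_def bump_deriv2_def by (intro continuous_intros)+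

lemma bump_nonneg: "0 \<le> bump h y"
  by (simp add: bump_def)

lemma bump_0: "bump h 0 = h ^ 6"
  by (simp add: bump_def flip: power_mult)

lemma bump_support:
  assumes "0 \<le> h" "h \<le> norm y"
  shows "max 0 (h\<^sup>2 - y \<bullet> y) = 0"
  using power_mono[OF assms(2) assms(1), of 2] by (simp add: power2_norm_eq_inner)

lemma bump_eq_0_outside_cube:
  assumes "0 \<le> h" "y \<notin> cbox (- (h *\<^sub>R One)) (h *\<^sub>R One)"
  shows "bump h y = 0"
proof -
  from assms(2) obtain i where i: "i \<in> Basis" "h < \<bar>y \<bullet> i\<bar>"
    by (auto simp: mem_box abs_less_iff)
  have "h \<le> norm y"
    using Basis_le_norm[OF i(1), of y] i by simp
  then show ?thesis
    using bump_support[OF assms(1)] by (simp add: bump_def)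
qed

lemma abs_bump_derivs_le:
  assumes "0 \<le> h" "norm e = 1"
  shows "\<bar>bump_deriv h y e\<bar> \<le> 6 * h ^ 5" "\<bar>bump_deriv2 h y e\<bar> \<le> 30 * h ^ 4"
proof -
  define P where "P = max 0 (h\<^sup>2 - y \<bullet> y)"
  have P: "0 \<le> P" "P \<le> h\<^sup>2"
    by (auto simp: P_def)
  have P2: "P\<^sup>2 \<le> h ^ 4"
    using power_mono[OF P(2) P(1), of 2] by (simp flip: power_mult)
  have ye: "\<bar>y \<bullet> e\<bar> \<le> h" if "P \<noteq> 0"
  proof -
    have "norm y < h"
      using bump_support[OF assms(1), of y] that by (force simp: P_def)
    then show ?thesis
      using Cauchy_Schwarz_ineq2[of y e] assms(2) by simp
  qed
  have "\<bar>bump_deriv h y e\<bar> = 6 * P\<^sup>2 * \<bar>y \<bullet> e\<bar>"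
    by (simp add: bump_deriv_def P_def abs_mult)
  also have "\<dots> \<le> 6 * h ^ 4 * h"
    using P2 ye assms(1) by (cases "P = 0") (auto intro: mult_mono)
  finally show "\<bar>bump_deriv h y e\<bar> \<le> 6 * h ^ 5"
    by (simp add: eval_nat_numeral algebra_simps)
  have "\<bar>bump_deriv2 h y e\<bar> \<le> 24 * P * (y \<bullet> e)\<^sup>2 + 6 * P\<^sup>2"
    using P assms(2) by (simp add: bump_deriv2_def P_def[symmetric] abs_le_iff norm_eq_1)
  also have "\<dots> \<le> 24 * h ^ 4 + 6 * h ^ 4"
  proof -
    have "P * (y \<bullet> e)\<^sup>2 \<le> h\<^sup>2 * h\<^sup>2"
    proof (cases "P = 0")
      case False
      then have "(y \<bullet> e)\<^sup>2 \<le> h\<^sup>2"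
        using ye assms(1) by (metis abs_le_square_iff abs_of_nonneg)
      with P show ?thesis
        by (intro mult_mono) auto
    qed simp
    then have "24 * P * (y \<bullet> e)\<^sup>2 \<le> 24 * h ^ 4"
      by (simp add: power4_eq_xxxx power2_eq_square)
    with P2 show ?thesis
      by linarith
  qed
  finally show "\<bar>bump_deriv2 h y e\<bar> \<le> 30 * h ^ 4"
    by simp
qed

definition cube_convolution :: "real \<Rightarrow> ('a::euclidean_space \<Rightarrow> real) \<Rightarrow> ('a \<Rightarrow> real) \<Rightarrow> 'a \<Rightarrow> real" where
  "cube_convolution c f g x = integral (cbox (- (c *\<^sub>R One)) (c *\<^sub>R One)) (\<lambda>z. f z * g (x - z))"

lemma integrable_convolution:
  fixes f g :: "'a::euclidean_space \<Rightarrow> real"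
  assumes "continuous_on UNIV f" "continuous_on UNIV g"
  shows "(\<lambda>z. f z * g (x - z)) integrable_on cbox a b"
  by (intro integrable_continuous continuous_intros continuous_on_subset[OF assms(1)]
      continuous_on_compose2[OF assms(2)]) auto

lemma continuous_on_cube_convolution:
  assumes "continuous_on UNIV f" "continuous_on UNIV g"
  shows "continuous_on UNIV (cube_convolution c f g)"
  unfolding cube_convolution_def[abs_def]
  by (rule integral_continuous_on_param)
    (auto intro!: continuous_intros continuous_on_compose2[OF assms(1)]
      continuous_on_compose2[OF assms(2)] simp: split_beta)

lemma cube_convolution_line_deriv:
  fixes f g g' :: "'a::euclidean_space \<Rightarrow> real"
  assumes f: "continuous_on UNIV f" and g: "continuous_on UNIV g" and g': "continuous_on UNIV g'"
    and deriv: "\<And>y s. ((\<lambda>s. g (y + s *\<^sub>R v)) has_real_derivative g' (y + s *\<^sub>R v)) (at s)"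
  shows "((\<lambda>s. cube_convolution c f g (x + s *\<^sub>R v)) has_real_derivative cube_convolution c f g' x) (at 0)"
proof -
  let ?C = "cbox (- (c *\<^sub>R One)) (c *\<^sub>R One) :: 'a set"
  have "((\<lambda>s. integral ?C (\<lambda>z. f z * g (x - z + s *\<^sub>R v))) has_field_derivative
      integral ?C (\<lambda>z. f z * g' (x - z + 0 *\<^sub>R v))) (at 0 within UNIV)"
  proof (rule leibniz_rule_field_derivative)
    show "((\<lambda>s. f z * g (x - z + s *\<^sub>R v)) has_field_derivative f z * g' (x - z + s *\<^sub>R v))
        (at s within UNIV)" for s z
      by (rule DERIV_cmult[OF deriv])
    show "(\<lambda>z. f z * g (x - z + s *\<^sub>R v)) integrable_on ?C" for s
    proof -
      have "continuous_on UNIV (\<lambda>y. g (y + s *\<^sub>R v))"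
        by (intro continuous_on_compose2[OF g] continuous_intros) auto
      from integrable_convolution[OF f this] show ?thesis
        by simp
    qed
    show "continuous_on (UNIV \<times> ?C) (\<lambda>(s, z). f z * g' (x - z + s *\<^sub>R v))"
      by (auto intro!: continuous_intros continuous_on_compose2[OF f]
          continuous_on_compose2[OF g'] simp: split_beta)
  qed auto
  then show ?thesis
    by (simp add: cube_convolution_def algebra_simps)
qed

lemma abs_cube_convolution_le:
  fixes f g :: "'a::euclidean_space \<Rightarrow> real"
  assumes "continuous_on UNIV f" "continuous_on UNIV g" "0 \<le> A"
    and f: "\<And>z. z \<in> cbox (- (c *\<^sub>R One)) (c *\<^sub>R One) \<Longrightarrow> \<bar>f z\<bar> \<le> A" and g: "\<And>y. \<bar>g y\<bar> \<le> B"
  shows "\<bar>cube_convolution c f g x\<bar>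
    \<le> A * B * Henstock_Kurzweil_Integration.content (cbox (- (c *\<^sub>R One)) (c *\<^sub>R One) :: 'a set)"
proof -
  have "norm (cube_convolution c f g x)
      \<le> A * B * Henstock_Kurzweil_Integration.content (cbox (- (c *\<^sub>R One)) (c *\<^sub>R One) :: 'a set)"
    unfolding cube_convolution_def
  proof (rule has_integral_bound)
    show "0 \<le> A * B"
      using \<open>0 \<le> A\<close> g[of 0] by simp
    show "norm (f z * g (x - z)) \<le> A * B" if "z \<in> cbox (- (c *\<^sub>R One)) (c *\<^sub>R One)" for z
      using f[OF that] g[of "x - z"] \<open>0 \<le> A\<close> by (simp add: abs_mult mult_mono)
  qed (use integrable_convolution[OF assms(1,2)] in blast)
  then show ?thesis
    by simp
qed

lemma inner_One_Basis [simp]: "i \<in> Basis \<Longrightarrow> (One :: 'a::euclidean_space) \<bullet> i = 1"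
  by (simp add: inner_sum_left inner_Basis)

lemma mem_cube:
  fixes y :: "'a::euclidean_space"
  shows "y \<in> cbox (- (h *\<^sub>R One)) (h *\<^sub>R One) \<longleftrightarrow> (\<forall>i\<in>Basis. \<bar>y \<bullet> i\<bar> \<le> h)"
  by (auto simp: mem_box abs_le_iff)

lemma cube_convolution_commute:
  fixes f g :: "'a::euclidean_space \<Rightarrow> real"
  assumes f: "continuous_on UNIV f" and g: "continuous_on UNIV g"
    and supp: "\<And>y. y \<notin> cbox (- (h *\<^sub>R One)) (h *\<^sub>R One) \<Longrightarrow> g y = 0"
    and x: "\<And>i. i \<in> Basis \<Longrightarrow> \<bar>x \<bullet> i\<bar> + h \<le> c"
  shows "cube_convolution c f g x = cube_convolution h g f x"
proof -
  let ?I = "cube_convolution c f g x"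
  let ?H = "cbox (- (h *\<^sub>R One)) (h *\<^sub>R One) :: 'a set"
  have "((\<lambda>z. f z * g (x - z)) has_integral ?I) (cbox (- (c *\<^sub>R One)) (c *\<^sub>R One))"
    unfolding cube_convolution_def using integrable_convolution[OF f g] by blast
  then have "((\<lambda>z. f (- z) * g (x + z)) has_integral ?I) (cbox (- (c *\<^sub>R One)) (c *\<^sub>R One))"
    using has_integral_reflect[of "\<lambda>z. f z * g (x - z)" ?I "c *\<^sub>R One" "- (c *\<^sub>R One)"] by simp
  from has_integral_affinity'[OF this, of 1 "- x"]
  have big: "((\<lambda>y. g y * f (x - y)) has_integral ?I) (cbox (x - c *\<^sub>R One) (x + c *\<^sub>R One))"
    by (simp add: algebra_simps)
  have sub: "?H \<subseteq> cbox (x - c *\<^sub>R One) (x + c *\<^sub>R One)"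
  proof
    fix y assume y: "y \<in> ?H"
    show "y \<in> cbox (x - c *\<^sub>R One) (x + c *\<^sub>R One)"
      unfolding mem_box
    proof (intro ballI conjI)
      fix i :: 'a assume "i \<in> Basis"
      with x y have "\<bar>y \<bullet> i\<bar> + \<bar>x \<bullet> i\<bar> \<le> c"
        by (fastforce simp: mem_cube)
      with \<open>i \<in> Basis\<close> show "(x - c *\<^sub>R One) \<bullet> i \<le> y \<bullet> i" "y \<bullet> i \<le> (x + c *\<^sub>R One) \<bullet> i"
        by (auto simp: inner_diff_left inner_add_left)
    qed
  qed
  have "((\<lambda>y. g y * f (x - y)) has_integral cube_convolution h g f x) ?H"
    unfolding cube_convolution_def using integrable_convolution[OF g f] by blast
  then have "((\<lambda>y. g y * f (x - y)) has_integral cube_convolution h g f x)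
      (cbox (x - c *\<^sub>R One) (x + c *\<^sub>R One))"
    by (rule has_integral_on_superset[OF _ _ sub]) (simp add: supp)
  with big show ?thesis
    using has_integral_unique by blast
qed

lemma integral_cbox_pos:
  fixes f :: "'a::euclidean_space \<Rightarrow> real"
  assumes "continuous_on (cbox a b) f" "\<And>x. x \<in> cbox a b \<Longrightarrow> 0 \<le> f x"
    and "x \<in> box a b" "0 < f x"
  shows "0 < integral (cbox a b) f"
proof -
  have "0 \<le> integral (cbox a b) f"
    using assms(1,2) by (intro integral_nonneg integrable_continuous) auto
  moreover have "integral (cbox a b) f \<noteq> 0"
    using integral_cbox_eq_0_iff[OF assms(1) _ assms(2)] assms(3,4) box_subset_cbox by force
  ultimately show ?thesis
    by simp
qed

lemma continuous_nonvanishing_locally_aligned: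
  fixes G :: "'a::real_normed_vector \<Rightarrow> 'b::real_inner"
  assumes G: "continuous_on UNIV G" and "compact F" and nz: "\<And>b. b \<in> F \<Longrightarrow> G b \<noteq> 0"
  obtains h where "0 < h" "\<And>b y. b \<in> F \<Longrightarrow> norm y \<le> h \<Longrightarrow> 0 < G (b - y) \<bullet> G b"
proof -
  have "continuous_on UNIV (\<lambda>z::'a \<times> 'a. G (snd z - fst z))" "continuous_on UNIV (\<lambda>z::'a \<times> 'a. G (snd z))"
    by (rule continuous_on_compose2[OF G], intro continuous_intros, simp)+
  then have W: "open {z. 0 < G (snd z - fst z) \<bullet> G (snd z)}"
    by (intro open_Collect_less continuous_intros)
  have "{0} \<times> F \<subseteq> {z. 0 < G (snd z - fst z) \<bullet> G (snd z)}"
    using nz by auto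
  from Elementary_Topology.tube_lemma[OF \<open>compact F\<close> W this]
  obtain U where "0 \<in> U" "open U" and UF: "U \<times> F \<subseteq> {z. 0 < G (snd z - fst z) \<bullet> G (snd z)}"
    by blast
  then obtain r where "0 < r" "ball 0 r \<subseteq> U"
    using open_contains_ball by blast
  show ?thesis
  proof (rule that[of "r / 2"])
    show "0 < r / 2"
      using \<open>0 < r\<close> by simp
    fix b y :: 'a assume "b \<in> F" "norm y \<le> r / 2"
    then have "(y, b) \<in> U \<times> F"
      using \<open>ball 0 r \<subseteq> U\<close> \<open>0 < r\<close> by auto
    then show "0 < G (b - y) \<bullet> G b"
      using UF by auto
  qed
qed

text \<open>Near \<open>b\<close> the convolution can be differentiated through \<open>g\<close> instead of the bump.\<close>

lemma bump_mollification_line_deriv: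
  fixes g :: "'a::euclidean_space \<Rightarrow> real"
  assumes g: "C1_on g UNIV" and "0 < h" "norm b + h < c"
  shows "cube_convolution c g (\<lambda>y. bump_deriv h y w) b = cube_convolution h (bump h) (\<lambda>y. grad g y \<bullet> w) b"
proof -
  have gc: "continuous_on UNIV g"
    by (rule C1_on_UNIV_grad(3)[OF g])
  have commute: "cube_convolution c g (bump h) x = cube_convolution h (bump h) g x" if "norm x + h < c" for x
  proof (rule cube_convolution_commute[OF gc continuous_on_bump(1)])
    show "bump h y = 0" if "y \<notin> cbox (- (h *\<^sub>R One)) (h *\<^sub>R One)" for y
      using bump_eq_0_outside_cube[of h y] \<open>0 < h\<close> that by simp
    show "\<bar>x \<bullet> i\<bar> + h \<le> c" if "i \<in> Basis" for i
      using Basis_le_norm[OF that, of x] \<open>norm x + h < c\<close> by simp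
  qed
  have "((\<lambda>s. cube_convolution c g (bump h) (b + s *\<^sub>R w)) has_real_derivative
      cube_convolution c g (\<lambda>y. bump_deriv h y w) b) (at 0)"
    by (rule cube_convolution_line_deriv[OF gc continuous_on_bump(1,2) bump_line_deriv])
  moreover have "continuous_on UNIV (\<lambda>y. grad g y \<bullet> w)"
    using C1_on_UNIV_grad(2)[OF g] by (intro continuous_intros)
  then have "((\<lambda>s. cube_convolution h (bump h) g (b + s *\<^sub>R w)) has_real_derivative
      cube_convolution h (bump h) (\<lambda>y. grad g y \<bullet> w) b) (at 0)"
    by (rule cube_convolution_line_deriv[OF continuous_on_bump(1) gc _
          has_real_derivative_line[OF C1_on_UNIV_grad(1)[OF g]]])
  then have "((\<lambda>s. cube_convolution c g (bump h) (b + s *\<^sub>R w)) has_real_derivative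
      cube_convolution h (bump h) (\<lambda>y. grad g y \<bullet> w) b) (at 0)"
    by (rule has_field_derivative_transform_within_open[where S="{s. norm (b + s *\<^sub>R w) + h < c}"])
      (use \<open>norm b + h < c\<close> commute in \<open>auto intro!: open_Collect_less continuous_intros\<close>)
  ultimately show ?thesis
    by (rule DERIV_unique)
qed

lemma bump_mollification_inward_deriv_neg:
  fixes g :: "'a::euclidean_space \<Rightarrow> real"
  assumes g: "C1_on g UNIV" and "0 < h" and aligned: "\<And>y. norm y \<le> h \<Longrightarrow> 0 < grad g (b - y) \<bullet> grad g b"
    and "norm b + h < c"
  shows "cube_convolution c g (\<lambda>y. bump_deriv h y (- grad g b)) b < 0"
proof -
  let ?H = "cbox (- (h *\<^sub>R One)) (h *\<^sub>R One) :: 'a set"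
  let ?f = "\<lambda>y. bump h y * (grad g (b - y) \<bullet> grad g b)"
  have "0 \<le> ?f y" for y
  proof (cases "norm y \<le> h")
    case True
    then show ?thesis
      using aligned[OF True] bump_nonneg[of h y] by simp
  next
    case False
    then show ?thesis
      using bump_support[of h y] \<open>0 < h\<close> by (simp add: bump_def)
  qed
  moreover have "0 < ?f 0"
    using aligned[of 0] \<open>0 < h\<close> by (simp add: bump_0)
  moreover have "0 \<in> box (- (h *\<^sub>R One)) (h *\<^sub>R One)"
    using \<open>0 < h\<close> by (simp add: mem_box)
  moreover have "continuous_on ?H (\<lambda>y. grad g (b - y))"
    by (rule continuous_on_compose2[OF C1_on_UNIV_grad(2)[OF g]], intro continuous_intros, simp)
  then have "continuous_on ?H ?f"
    by (intro continuous_intros)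
  ultimately have "0 < integral ?H ?f"
    using integral_cbox_pos[of _ _ ?f 0] by simp
  then show ?thesis
    using bump_mollification_line_deriv[OF g \<open>0 < h\<close> \<open>norm b + h < c\<close>, of "- grad g b"]
    by (simp add: cube_convolution_def integral_neg)
qed

lemma bump_mollification_derivs_bounded:
  fixes g :: "'a::euclidean_space \<Rightarrow> real"
  assumes gc: "continuous_on UNIV g" and "0 \<le> h"
  obtains C where "\<And>x e. e \<in> Basis \<Longrightarrow> \<bar>cube_convolution c g (\<lambda>y. bump_deriv h y e) x\<bar> \<le> C \<and>
    \<bar>cube_convolution c g (\<lambda>y. bump_deriv2 h y e) x\<bar> \<le> C"
proof -
  let ?K = "cbox (- (c *\<^sub>R One)) (c *\<^sub>R One) :: 'a set"
  have "bounded (g ` ?K)"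
    using compact_imp_bounded[OF compact_continuous_image[OF continuous_on_subset[OF gc subset_UNIV] compact_cbox]] .
  then obtain A where "0 < A" and A: "\<And>z. z \<in> ?K \<Longrightarrow> \<bar>g z\<bar> \<le> A"
    by (auto simp: bounded_pos)
  define C where "C = A * (6 * h ^ 5 + 30 * h ^ 4) * Henstock_Kurzweil_Integration.content ?K"
  have le_C: "A * B * Henstock_Kurzweil_Integration.content ?K \<le> C" if "0 \<le> B" "B \<le> 6 * h ^ 5 + 30 * h ^ 4" for B
    unfolding C_def using that \<open>0 < A\<close> by (intro mult_right_mono mult_left_mono) auto
  show ?thesis
  proof (rule that)
    fix x and e :: 'a assume "e \<in> Basis"
    then have B1: "\<bar>bump_deriv h y e\<bar> \<le> 6 * h ^ 5" and B2: "\<bar>bump_deriv2 h y e\<bar> \<le> 30 * h ^ 4" for y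
      using abs_bump_derivs_le[of h e y] \<open>0 \<le> h\<close> by auto
    have "\<bar>cube_convolution c g (\<lambda>y. bump_deriv h y e) x\<bar>
        \<le> A * (6 * h ^ 5) * Henstock_Kurzweil_Integration.content ?K"
      using \<open>0 < A\<close> by (intro abs_cube_convolution_le[OF gc continuous_on_bump(2) _ A B1]) simp
    moreover have "\<bar>cube_convolution c g (\<lambda>y. bump_deriv2 h y e) x\<bar>
        \<le> A * (30 * h ^ 4) * Henstock_Kurzweil_Integration.content ?K"
      using \<open>0 < A\<close> by (intro abs_cube_convolution_le[OF gc continuous_on_bump(3) _ A B2]) simp
    ultimately show "\<bar>cube_convolution c g (\<lambda>y. bump_deriv h y e) x\<bar> \<le> C \<and>
        \<bar>cube_convolution c g (\<lambda>y. bump_deriv2 h y e) x\<bar> \<le> C"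
      using le_C[of "6 * h ^ 5"] le_C[of "30 * h ^ 4"] \<open>0 \<le> h\<close> by auto
  qed
qed

text \<open>Mollifying \<open>g\<close> supplies the second derivatives that \<open>g\<close> lacks. The sign on \<open>F\<close>
  survives because, within the radius \<open>h\<close> of the bump, \<open>grad g\<close> stays aligned with its
  value at each point of \<open>F\<close>.\<close>

lemma C1_barrier:
  fixes g :: "'a::euclidean_space \<Rightarrow> real"
  assumes g: "C1_on g UNIV" and "compact F" and nz: "\<And>b. b \<in> F \<Longrightarrow> grad g b \<noteq> 0"
  obtains k kd kdd C where "continuous_on UNIV k"
    "\<And>x v. ((\<lambda>s. k (x + s *\<^sub>R v)) has_real_derivative kd x v) (at 0)"
    "\<And>x e. e \<in> Basis \<Longrightarrow> ((\<lambda>s. kd (x + s *\<^sub>R e) e) has_real_derivative kdd x e) (at 0)"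
    "\<And>x e. e \<in> Basis \<Longrightarrow> \<bar>kd x e\<bar> \<le> C \<and> \<bar>kdd x e\<bar> \<le> C"
    "\<And>b. b \<in> F \<Longrightarrow> kd b (- grad g b) < 0"
proof -
  obtain h where "0 < h" and aligned: "\<And>b y. b \<in> F \<Longrightarrow> norm y \<le> h \<Longrightarrow> 0 < grad g (b - y) \<bullet> grad g b"
    using continuous_nonvanishing_locally_aligned[OF C1_on_UNIV_grad(2)[OF g] \<open>compact F\<close> nz] by blast
  obtain R where R: "\<And>b. b \<in> F \<Longrightarrow> norm b \<le> R"
    using compact_imp_bounded[OF \<open>compact F\<close>] by (auto simp: bounded_iff)
  define c where "c = R + h + 1"
  have gc: "continuous_on UNIV g"
    by (rule C1_on_UNIV_grad(3)[OF g])
  obtain C where C: "\<And>x e. e \<in> Basis \<Longrightarrow> \<bar>cube_convolution c g (\<lambda>y. bump_deriv h y e) x\<bar> \<le> C \<and>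
      \<bar>cube_convolution c g (\<lambda>y. bump_deriv2 h y e) x\<bar> \<le> C"
    using bump_mollification_derivs_bounded[OF gc less_imp_le[OF \<open>0 < h\<close>]] by blast
  show ?thesis
  proof (rule that[of "cube_convolution c g (bump h)" "\<lambda>x v. cube_convolution c g (\<lambda>y. bump_deriv h y v) x"
        "\<lambda>x v. cube_convolution c g (\<lambda>y. bump_deriv2 h y v) x" C])
    show "continuous_on UNIV (cube_convolution c g (bump h))"
      by (rule continuous_on_cube_convolution[OF gc continuous_on_bump(1)])
    show "((\<lambda>s. cube_convolution c g (bump h) (x + s *\<^sub>R v)) has_real_derivative
        cube_convolution c g (\<lambda>y. bump_deriv h y v) x) (at 0)" for x v
      by (rule cube_convolution_line_deriv[OF gc continuous_on_bump(1,2) bump_line_deriv])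
    show "((\<lambda>s. cube_convolution c g (\<lambda>y. bump_deriv h y e) (x + s *\<^sub>R e)) has_real_derivative
        cube_convolution c g (\<lambda>y. bump_deriv2 h y e) x) (at 0)" for x e
      by (rule cube_convolution_line_deriv[OF gc continuous_on_bump(2,3) bump_deriv_line_deriv])
    show "cube_convolution c g (\<lambda>y. bump_deriv h y (- grad g b)) b < 0" if "b \<in> F" for b
      using bump_mollification_inward_deriv_neg[OF g \<open>0 < h\<close> aligned[OF that]] R[OF that]
      by (simp add: c_def)
  qed (rule C)
qed

lemma C1_domain_continuous:
  assumes "C1_domain \<Omega> g"
  shows "continuous_on UNIV g"
  by (rule C1_on_UNIV_grad(3)) (use assms in \<open>simp add: C1_domain_def\<close>)

lemma C1_domain_open:
  assumes "C1_domain \<Omega> g"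
  shows "open \<Omega>"
proof -
  have "open {x. g x < 0}"
    using C1_domain_continuous[OF assms] by (intro open_Collect_less continuous_on_const)
  with assms show ?thesis
    by (simp add: C1_domain_def)
qed

lemma C1_domain_frontier:
  assumes "C1_domain \<Omega> g" "x \<in> frontier \<Omega>"
  shows "g x = 0"
proof -
  have \<Omega>: "\<Omega> = {x. g x < 0}"
    using assms(1) by (simp add: C1_domain_def)
  have "closed {x. g x \<le> 0}"
    using C1_domain_continuous[OF assms(1)] by (intro closed_Collect_le continuous_on_const)
  then have "closure \<Omega> \<subseteq> {x. g x \<le> 0}"
    by (rule closure_minimal[rotated]) (auto simp: \<Omega>)
  moreover have "x \<in> closure \<Omega>" "x \<notin> \<Omega>"
    using assms(2) C1_domain_open[OF assms(1)] by (auto simp: frontier_def interior_open)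
  ultimately show ?thesis
    by (auto simp: \<Omega>)
qed

lemma C1_domain_inward:
  assumes "C1_domain \<Omega> g" "x \<in> frontier \<Omega>"
  shows "\<exists>d>0. \<forall>s. 0 < s \<and> s < d \<longrightarrow> x - s *\<^sub>R grad g x \<in> \<Omega>"
proof -
  have g: "C1_on g UNIV" and \<Omega>: "\<Omega> = {x. g x < 0}" and "grad g x \<noteq> 0"
    using assms C1_domain_frontier[OF assms] by (auto simp: C1_domain_def)
  have "((\<lambda>s. g (x + s *\<^sub>R - grad g x)) has_real_derivative grad g x \<bullet> - grad g x) (at 0)"
    by (rule has_real_derivative_line_0[OF C1_on_UNIV_grad(1)[OF g]])
  moreover have "grad g x \<bullet> - grad g x < 0"
    using \<open>grad g x \<noteq> 0\<close> by simp
  ultimately obtain d where "0 < d"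
    and dec: "\<forall>s>0. s < d \<longrightarrow> g (x + 0 *\<^sub>R - grad g x) > g (x + (0 + s) *\<^sub>R - grad g x)"
    by (blast dest: DERIV_neg_dec_right)
  have "x - s *\<^sub>R grad g x \<in> \<Omega>" if "0 < s" "s < d" for s
    using dec that C1_domain_frontier[OF assms] by (simp add: \<Omega>)
  with \<open>0 < d\<close> show ?thesis
    by blast
qed

section \<open>A maximum principle for the Neumann problem\<close>

definition neumann_solution ::
    "'a::euclidean_space set \<Rightarrow> ('a \<Rightarrow> 'a) \<Rightarrow> ('a \<Rightarrow> real \<Rightarrow> real) \<Rightarrow> ('a \<Rightarrow> real \<Rightarrow> real) \<Rightarrow> bool" where
  "neumann_solution \<Omega> N \<alpha> u \<longleftrightarrow>
     continuous_on (closure \<Omega> \<times> {0..}) (unc u) \<and>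
     (\<forall>x\<in>closure \<Omega>. \<forall>t>0. (\<lambda>y. u y t) differentiable (at x)) \<and>
     (\<forall>x\<in>\<Omega>. \<forall>t>0. (\<lambda>y. \<alpha> y t *\<^sub>R grad (\<lambda>y. u y t) y) differentiable (at x) \<and>
        ((\<lambda>s. u x s) has_real_derivative divg (\<lambda>y. \<alpha> y t *\<^sub>R grad (\<lambda>y. u y t) y) x) (at t)) \<and>
     (\<forall>x\<in>frontier \<Omega>. \<forall>t>0. grad (\<lambda>y. u y t) x \<bullet> N x = 0)"

lemma neumann_solution_uminus:
  assumes "open \<Omega>" and sol: "neumann_solution \<Omega> N \<alpha> u"
  shows "neumann_solution \<Omega> N \<alpha> (\<lambda>x t. - u x t)"
proof -
  have diff: "(\<lambda>y. u y t) differentiable (at x)" if "x \<in> closure \<Omega>" "0 < t" for x t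
    using sol that by (simp add: neumann_solution_def)
  have grad: "grad (\<lambda>y. - u y t) x = - grad (\<lambda>y. u y t) x" if "x \<in> closure \<Omega>" "0 < t" for x t
    by (rule grad_minus[OF diff[OF that]])
  have flux: "\<alpha> y t *\<^sub>R grad (\<lambda>y. - u y t) y = - (\<alpha> y t *\<^sub>R grad (\<lambda>y. u y t) y)" if "y \<in> \<Omega>" "0 < t" for y t
    using grad[OF closure_subset[THEN subsetD, OF that(1)] that(2)] by simp
  have "(\<lambda>y. \<alpha> y t *\<^sub>R grad (\<lambda>y. - u y t) y) differentiable (at x) \<and>
      ((\<lambda>s. - u x s) has_real_derivative divg (\<lambda>y. \<alpha> y t *\<^sub>R grad (\<lambda>y. - u y t) y) x) (at t)"
    if "x \<in> \<Omega>" "0 < t" for x t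
  proof -
    let ?A = "\<lambda>y. \<alpha> y t *\<^sub>R grad (\<lambda>y. u y t) y"
    have A: "?A differentiable (at x)" and ut: "((\<lambda>s. u x s) has_real_derivative divg ?A x) (at t)"
      using sol that by (auto simp: neumann_solution_def)
    have eq: "- ?A y = \<alpha> y t *\<^sub>R grad (\<lambda>y. - u y t) y" if "y \<in> \<Omega>" for y
      using flux[OF that \<open>0 < t\<close>] by simp
    have "(\<lambda>y. \<alpha> y t *\<^sub>R grad (\<lambda>y. - u y t) y) differentiable (at x)"
      by (rule differentiable_transform_open[OF differentiable_minus[OF A] \<open>open \<Omega>\<close> \<open>x \<in> \<Omega>\<close> eq])
    moreover have "divg (\<lambda>y. \<alpha> y t *\<^sub>R grad (\<lambda>y. - u y t) y) x = - divg ?A x"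
      using divg_cong_open[OF \<open>open \<Omega>\<close> \<open>x \<in> \<Omega>\<close> eq] divg_minus[OF A] by simp
    ultimately show ?thesis
      using DERIV_minus[OF ut] by simp
  qed
  moreover have "continuous_on (closure \<Omega> \<times> {0..}) (unc (\<lambda>x t. - u x t))"
    using sol by (simp add: neumann_solution_def unc_def[abs_def] continuous_on_minus)
  moreover have "(\<lambda>y. - u y t) differentiable (at x)" if "x \<in> closure \<Omega>" "0 < t" for x t
    using diff[OF that] by (rule differentiable_minus)
  moreover have "grad (\<lambda>y. - u y t) x \<bullet> N x = 0" if "x \<in> frontier \<Omega>" "0 < t" for x t
    using sol that grad[of x t] by (simp add: neumann_solution_def frontier_def)
  ultimately show ?thesis
    by (simp add: neumann_solution_def)
qed

text \<open>Subtracting \<open>\<epsilon> k\<close> from a solution pushes its maxima off the boundary, while the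
  bounds on the derivatives of \<open>k\<close> keep the resulting perturbation of the equation of
  order \<open>\<epsilon>\<close>.\<close>

locale neumann_barrier =
  fixes \<Omega> :: "'a::euclidean_space set" and N :: "'a \<Rightarrow> 'a"
    and k :: "'a \<Rightarrow> real" and kd kdd :: "'a \<Rightarrow> 'a \<Rightarrow> real" and C :: real
  assumes open_domain: "open \<Omega>" and bounded_domain: "bounded \<Omega>"
    and inward: "\<And>x. x \<in> frontier \<Omega> \<Longrightarrow> \<exists>d>0. \<forall>s. 0 < s \<and> s < d \<longrightarrow> x - s *\<^sub>R N x \<in> \<Omega>"
    and continuous_barrier: "continuous_on UNIV k"
    and barrier_deriv: "\<And>x v. ((\<lambda>s. k (x + s *\<^sub>R v)) has_real_derivative kd x v) (at 0)"
    and barrier_deriv2: "\<And>x e. e \<in> Basis \<Longrightarrow> ((\<lambda>s. kd (x + s *\<^sub>R e) e) has_real_derivative kdd x e) (at 0)"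
    and barrier_bounded: "\<And>x e. e \<in> Basis \<Longrightarrow> \<bar>kd x e\<bar> \<le> C \<and> \<bar>kdd x e\<bar> \<le> C"
    and barrier_outward: "\<And>x. x \<in> frontier \<Omega> \<Longrightarrow> kd x (- N x) < 0"

lemma C1_domain_neumann_barrier:
  assumes "bounded \<Omega>" "C1_domain \<Omega> g"
  obtains k kd kdd C where "neumann_barrier \<Omega> (grad g) k kd kdd C"
proof -
  have g: "C1_on g UNIV"
    using assms(2) by (simp add: C1_domain_def)
  have F: "compact (frontier \<Omega>)"
    using \<open>bounded \<Omega>\<close> by (simp add: compact_frontier_bounded)
  have nz: "grad g b \<noteq> 0" if "b \<in> frontier \<Omega>" for b
    using assms(2) C1_domain_frontier[OF assms(2) that] by (simp add: C1_domain_def)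
  obtain k kd kdd C where barrier: "continuous_on UNIV k"
    "\<And>x v. ((\<lambda>s. k (x + s *\<^sub>R v)) has_real_derivative kd x v) (at 0)"
    "\<And>x e. e \<in> Basis \<Longrightarrow> ((\<lambda>s. kd (x + s *\<^sub>R e) e) has_real_derivative kdd x e) (at 0)"
    "\<And>x e. e \<in> Basis \<Longrightarrow> \<bar>kd x e\<bar> \<le> C \<and> \<bar>kdd x e\<bar> \<le> C"
    "\<And>b. b \<in> frontier \<Omega> \<Longrightarrow> kd b (- grad g b) < 0"
    using C1_barrier[OF g F nz] by blast
  have "neumann_barrier \<Omega> (grad g) k kd kdd C"
  proof
    show "open \<Omega>"
      by (rule C1_domain_open[OF assms(2)])
    show "\<exists>d>0. \<forall>s. 0 < s \<and> s < d \<longrightarrow> x - s *\<^sub>R grad g x \<in> \<Omega>" if "x \<in> frontier \<Omega>" for x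
      by (rule C1_domain_inward[OF assms(2) that])
  qed (fact assms(1) barrier)+
  then show ?thesis
    by (rule that)
qed

context neumann_barrier
begin

lemma perturbed_line_deriv:
  assumes sol: "neumann_solution \<Omega> N \<alpha> u" and "x + s *\<^sub>R v \<in> closure \<Omega>" "0 < t"
  shows "((\<lambda>s. u (x + s *\<^sub>R v) t - \<epsilon> * k (x + s *\<^sub>R v)) has_real_derivative
    grad (\<lambda>y. u y t) (x + s *\<^sub>R v) \<bullet> v - \<epsilon> * kd (x + s *\<^sub>R v) v) (at s)"
proof -
  have "(\<lambda>y. u y t) differentiable (at (x + s *\<^sub>R v))"
    using sol assms(2,3) by (simp add: neumann_solution_def)
  then have "((\<lambda>s. u (x + s *\<^sub>R v) t) has_real_derivative grad (\<lambda>y. u y t) (x + s *\<^sub>R v) \<bullet> v) (at s)"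
    by (rule has_real_derivative_line[OF has_derivative_grad])
  moreover have "((\<lambda>s. k (x + s *\<^sub>R v)) has_real_derivative kd (x + s *\<^sub>R v) v) (at s)"
    by (rule has_real_derivative_line_shift[OF barrier_deriv])
  ultimately show ?thesis
    by (rule DERIV_diff[OF _ DERIV_cmult])
qed

lemma perturbed_max_not_on_frontier:
  assumes sol: "neumann_solution \<Omega> N \<alpha> u" and x0: "x0 \<in> frontier \<Omega>" and "0 < t" "0 < \<epsilon>"
  shows "\<exists>y\<in>\<Omega>. u x0 t - \<epsilon> * k x0 < u y t - \<epsilon> * k y"
proof -
  let ?f = "\<lambda>s. u (x0 + s *\<^sub>R - N x0) t - \<epsilon> * k (x0 + s *\<^sub>R - N x0)"
  have "x0 \<in> closure \<Omega>"
    using x0 by (simp add: frontier_def)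
  then have "(?f has_real_derivative grad (\<lambda>y. u y t) x0 \<bullet> - N x0 - \<epsilon> * kd x0 (- N x0)) (at 0)"
    using perturbed_line_deriv[OF sol _ \<open>0 < t\<close>, of x0 0 "- N x0" \<epsilon>] by simp
  moreover have "grad (\<lambda>y. u y t) x0 \<bullet> - N x0 = 0"
    using sol x0 \<open>0 < t\<close> by (simp add: neumann_solution_def)
  moreover have "0 < - (\<epsilon> * kd x0 (- N x0))"
    using barrier_outward[OF x0] \<open>0 < \<epsilon>\<close> by (simp add: mult_pos_neg)
  ultimately obtain d2 where "0 < d2" and inc: "\<forall>h>0. h < d2 \<longrightarrow> ?f 0 < ?f (0 + h)"
    using DERIV_pos_inc_right[of ?f "- (\<epsilon> * kd x0 (- N x0))" 0] by auto
  obtain d1 where "0 < d1" and into: "\<forall>s. 0 < s \<and> s < d1 \<longrightarrow> x0 - s *\<^sub>R N x0 \<in> \<Omega>"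
    using inward[OF x0] by blast
  define s where "s = min d1 d2 / 2"
  have "0 < s" "s < d1" "s < d2"
    using \<open>0 < d1\<close> \<open>0 < d2\<close> by (auto simp: s_def)
  then have "x0 - s *\<^sub>R N x0 \<in> \<Omega>" and "?f 0 < ?f s"
    using inc into by auto
  then show ?thesis
    by (intro bexI[of _ "x0 - s *\<^sub>R N x0"]) simp_all
qed

lemma divg_flux_le_at_perturbed_max:
  assumes sol: "neumann_solution \<Omega> N \<alpha> u" and \<alpha>_pos: "\<And>x. x \<in> \<Omega> \<Longrightarrow> 0 < \<alpha> x t"
    and "x0 \<in> \<Omega>" "0 < t"
    and max: "\<And>y. y \<in> \<Omega> \<Longrightarrow> u y t - \<epsilon> * k y \<le> u x0 t - \<epsilon> * k x0"
    and Lk: "\<And>e. e \<in> Basis \<Longrightarrow>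
      ((\<lambda>s. \<alpha> (x0 + s *\<^sub>R e) t * kd (x0 + s *\<^sub>R e) e) has_real_derivative Lk e) (at 0)"
  shows "divg (\<lambda>y. \<alpha> y t *\<^sub>R grad (\<lambda>y. u y t) y) x0 \<le> \<epsilon> * (\<Sum>e\<in>Basis. Lk e)"
proof -
  let ?A = "\<lambda>y. \<alpha> y t *\<^sub>R grad (\<lambda>y. u y t) y"
  have "?A differentiable (at x0)"
    using sol \<open>x0 \<in> \<Omega>\<close> \<open>0 < t\<close> by (simp add: neumann_solution_def)
  then obtain DA where DA: "(?A has_derivative DA) (at x0)"
    by (auto simp: differentiable_def)
  obtain r where "0 < r" "ball x0 r \<subseteq> \<Omega>"
    using open_domain \<open>x0 \<in> \<Omega>\<close> open_contains_ball by blast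
  then have line: "x0 + s *\<^sub>R e \<in> \<Omega>" if "e \<in> Basis" "\<bar>s\<bar> < r" for e s
    using that by (auto simp: dist_norm subset_iff)
  have "DA e \<bullet> e - \<epsilon> * Lk e \<le> 0" if e: "e \<in> Basis" for e
  proof (rule DERIV_weighted_slope_nonpos_at_max[OF \<open>0 < r\<close>])
    show "((\<lambda>s. u (x0 + s *\<^sub>R e) t - \<epsilon> * k (x0 + s *\<^sub>R e)) has_real_derivative
        grad (\<lambda>y. u y t) (x0 + s *\<^sub>R e) \<bullet> e - \<epsilon> * kd (x0 + s *\<^sub>R e) e) (at s)" if "\<bar>s\<bar> < r" for s
      using line[OF e that] closure_subset by (intro perturbed_line_deriv[OF sol _ \<open>0 < t\<close>]) blast
    show "u (x0 + s *\<^sub>R e) t - \<epsilon> * k (x0 + s *\<^sub>R e) \<le> u (x0 + 0 *\<^sub>R e) t - \<epsilon> * k (x0 + 0 *\<^sub>R e)"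
      if "\<bar>s\<bar> < r" for s
      using max[OF line[OF e that]] by simp
    show "0 < \<alpha> (x0 + s *\<^sub>R e) t" if "\<bar>s\<bar> < r" for s
      using \<alpha>_pos[OF line[OF e that]] .
    have "((\<lambda>y. ?A y \<bullet> e) has_derivative (\<lambda>v. DA v \<bullet> e)) (at x0)"
      by (rule bounded_linear.has_derivative[OF bounded_linear_inner_left DA])
    from DERIV_diff[OF has_real_derivative_line_0[OF this] DERIV_cmult[OF Lk[OF e]]]
    have "((\<lambda>s. ?A (x0 + s *\<^sub>R e) \<bullet> e - \<epsilon> * (\<alpha> (x0 + s *\<^sub>R e) t * kd (x0 + s *\<^sub>R e) e))
        has_real_derivative DA e \<bullet> e - \<epsilon> * Lk e) (at 0)" .
    moreover have "(\<lambda>s. ?A (x0 + s *\<^sub>R e) \<bullet> e - \<epsilon> * (\<alpha> (x0 + s *\<^sub>R e) t * kd (x0 + s *\<^sub>R e) e))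
        = (\<lambda>s. \<alpha> (x0 + s *\<^sub>R e) t * (grad (\<lambda>y. u y t) (x0 + s *\<^sub>R e) \<bullet> e - \<epsilon> * kd (x0 + s *\<^sub>R e) e))"
      by (simp add: fun_eq_iff algebra_simps)
    ultimately show "((\<lambda>s. \<alpha> (x0 + s *\<^sub>R e) t * (grad (\<lambda>y. u y t) (x0 + s *\<^sub>R e) \<bullet> e - \<epsilon> * kd (x0 + s *\<^sub>R e) e))
        has_real_derivative DA e \<bullet> e - \<epsilon> * Lk e) (at 0)"
      by simp
  qed
  then show ?thesis
    using divg_eq[OF DA] by (simp add: sum_distrib_left sum_mono)
qed

text \<open>\<open>\<nabla>\<cdot>(\<alpha> \<nabla>k)\<close>, assembled from directional derivatives since \<open>k\<close> need not be
  Frechet differentiable.\<close>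

definition barrier_flux_div :: "('a \<Rightarrow> real \<Rightarrow> real) \<Rightarrow> 'a \<Rightarrow> real \<Rightarrow> real" where
  "barrier_flux_div \<alpha> x t =
    (\<Sum>e\<in>Basis. frechet_derivative (unc \<alpha>) (at (x, t)) (e, 0) * kd x e + kdd x e * \<alpha> x t)"

lemma barrier_flux_deriv:
  assumes "C1_on (unc \<alpha>) (closure \<Omega> \<times> {0<..})" "x \<in> closure \<Omega>" "0 < t" "e \<in> Basis"
  shows "((\<lambda>s. \<alpha> (x + s *\<^sub>R e) t * kd (x + s *\<^sub>R e) e) has_real_derivative
    frechet_derivative (unc \<alpha>) (at (x, t)) (e, 0) * kd x e + kdd x e * \<alpha> x t) (at 0)"
proof -
  have "unc \<alpha> differentiable (at (x, t))"
    using assms by (simp add: C1_on_def)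
  from has_derivative_slice[OF this]
  have "((\<lambda>y. \<alpha> y t) has_derivative (\<lambda>v. frechet_derivative (unc \<alpha>) (at (x, t)) (v, 0))) (at x)"
    by (simp add: unc_def)
  from DERIV_mult[OF has_real_derivative_line_0[OF this] barrier_deriv2[OF \<open>e \<in> Basis\<close>]]
  show ?thesis
    by simp
qed

lemma barrier_flux_bounded:
  assumes \<alpha>: "C1_on (unc \<alpha>) (closure \<Omega> \<times> {0<..})" and "0 < \<tau>"
  obtains L where "\<And>x t. x \<in> closure \<Omega> \<Longrightarrow> t \<in> {\<tau>..T} \<Longrightarrow>
    barrier_flux_div \<alpha> x t \<le> L"
proof -
  have "compact (closure \<Omega> \<times> {\<tau>..T})"
    using bounded_domain by (simp add: compact_Times compact_closure)
  moreover have "closure \<Omega> \<times> {\<tau>..T} \<subseteq> closure \<Omega> \<times> {0<..}"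
    using \<open>0 < \<tau>\<close> by auto
  moreover have "finite ((\<lambda>e. (e, 0::real)) ` Basis)"
    by simp
  ultimately obtain M where M1: "\<And>z. z \<in> closure \<Omega> \<times> {\<tau>..T} \<Longrightarrow> \<bar>unc \<alpha> z\<bar> \<le> M"
    and M2: "\<And>z v. z \<in> closure \<Omega> \<times> {\<tau>..T} \<Longrightarrow> v \<in> (\<lambda>e. (e, 0)) ` Basis \<Longrightarrow>
      \<bar>frechet_derivative (unc \<alpha>) (at z) v\<bar> \<le> M"
    using C1_on_bounded_on_compact[OF \<alpha>] by blast
  have prod_le: "a * b \<le> A * B" if "\<bar>a\<bar> \<le> A" "\<bar>b\<bar> \<le> B" for a b A B :: real
  proof -
    have "a * b \<le> \<bar>a\<bar> * \<bar>b\<bar>"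
      by (simp flip: abs_mult)
    also have "\<dots> \<le> A * B"
      using that by (intro mult_mono) auto
    finally show ?thesis .
  qed
  show ?thesis
  proof (rule that)
    fix x t assume "x \<in> closure \<Omega>" "t \<in> {\<tau>..T}"
    then have z: "(x, t) \<in> closure \<Omega> \<times> {\<tau>..T}"
      by simp
    have "barrier_flux_div \<alpha> x t \<le> (\<Sum>e\<in>(Basis::'a set). M * C + C * M)"
      unfolding barrier_flux_div_def using barrier_bounded M1[OF z] M2[OF z]
      by (intro sum_mono add_mono prod_le) (auto simp: unc_def)
    then show "barrier_flux_div \<alpha> x t \<le> real DIM('a) * (M * C + C * M)"
      by simp
  qed
qed

lemma perturbed_max_not_after_initial_time:
  assumes sol: "neumann_solution \<Omega> N \<alpha> u" and \<alpha>: "C1_on (unc \<alpha>) (closure \<Omega> \<times> {0<..})"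
    and \<alpha>_pos: "\<And>x t. x \<in> \<Omega> \<Longrightarrow> 0 < t \<Longrightarrow> 0 < \<alpha> x t"
    and L: "\<And>x. x \<in> closure \<Omega> \<Longrightarrow>
      barrier_flux_div \<alpha> x t0 \<le> L"
    and "L < M" "0 < \<epsilon>" "0 \<le> \<tau>" "\<tau> < t0" and "x0 \<in> closure \<Omega>"
    and max: "\<And>y s. y \<in> closure \<Omega> \<Longrightarrow> s \<in> {\<tau>..t0} \<Longrightarrow>
      u y s - \<epsilon> * k y - \<epsilon> * M * (s - \<tau>) \<le> u x0 t0 - \<epsilon> * k x0 - \<epsilon> * M * (t0 - \<tau>)"
  shows False
proof -
  have "0 < t0"
    using \<open>0 \<le> \<tau>\<close> \<open>\<tau> < t0\<close> by linarith
  have max_t0: "u y t0 - \<epsilon> * k y \<le> u x0 t0 - \<epsilon> * k x0" if "y \<in> \<Omega>" for y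
    using max[of y t0] that closure_subset \<open>\<tau> < t0\<close> by auto
  have "x0 \<in> \<Omega> \<or> x0 \<in> frontier \<Omega>"
    using \<open>x0 \<in> closure \<Omega>\<close> open_domain by (auto simp: frontier_def interior_open)
  then show False
  proof
    assume "x0 \<in> \<Omega>"
    let ?A = "\<lambda>y. \<alpha> y t0 *\<^sub>R grad (\<lambda>y. u y t0) y"
    have "((\<lambda>s. u x0 s) has_real_derivative divg ?A x0) (at t0)"
      using sol \<open>x0 \<in> \<Omega>\<close> \<open>0 < t0\<close> by (simp add: neumann_solution_def)
    then have "((\<lambda>s. u x0 s - \<epsilon> * k x0 - \<epsilon> * M * (s - \<tau>)) has_real_derivative divg ?A x0 - \<epsilon> * M) (at t0)"
      by (auto intro!: derivative_eq_intros)
    from DERIV_nonneg_at_left_max[OF this \<open>\<tau> < t0\<close>] max[OF \<open>x0 \<in> closure \<Omega>\<close>]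
    have "\<epsilon> * M \<le> divg ?A x0"
      by simp
    also have "divg ?A x0 \<le> \<epsilon> * barrier_flux_div \<alpha> x0 t0"
      using \<alpha>_pos \<open>0 < t0\<close> \<open>x0 \<in> \<Omega>\<close> closure_subset
      unfolding barrier_flux_div_def
      by (intro divg_flux_le_at_perturbed_max[OF sol _ \<open>x0 \<in> \<Omega>\<close> \<open>0 < t0\<close> max_t0] barrier_flux_deriv[OF \<alpha>]) auto
    also have "\<dots> \<le> \<epsilon> * L"
      using L[OF \<open>x0 \<in> closure \<Omega>\<close>] \<open>0 < \<epsilon>\<close> by simp
    finally show False
      using \<open>L < M\<close> \<open>0 < \<epsilon>\<close> by simp
  next
    assume "x0 \<in> frontier \<Omega>"
    from perturbed_max_not_on_frontier[OF sol this \<open>0 < t0\<close> \<open>0 < \<epsilon>\<close>] max_t0 show False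
      by force
  qed
qed

lemma perturbed_max_at_initial_time:
  assumes sol: "neumann_solution \<Omega> N \<alpha> u" and \<alpha>: "C1_on (unc \<alpha>) (closure \<Omega> \<times> {0<..})"
    and \<alpha>_pos: "\<And>x t. x \<in> \<Omega> \<Longrightarrow> 0 < t \<Longrightarrow> 0 < \<alpha> x t"
    and L: "\<And>x t. x \<in> closure \<Omega> \<Longrightarrow> t \<in> {\<tau>..T} \<Longrightarrow>
      barrier_flux_div \<alpha> x t \<le> L"
    and "L < M" "0 < \<epsilon>" "0 < \<tau>" and x: "x \<in> closure \<Omega>" "t \<in> {\<tau>..T}"
  obtains x0 where "x0 \<in> closure \<Omega>" "u x t - \<epsilon> * k x - \<epsilon> * M * (t - \<tau>) \<le> u x0 \<tau> - \<epsilon> * k x0"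
proof -
  define \<Psi> where "\<Psi> z = u (fst z) (snd z) - \<epsilon> * k (fst z) - \<epsilon> * M * (snd z - \<tau>)" for z
  have "compact (closure \<Omega> \<times> {\<tau>..T})"
    using bounded_domain by (simp add: compact_Times compact_closure)
  moreover have "continuous_on (closure \<Omega> \<times> {\<tau>..T}) \<Psi>"
  proof -
    have "continuous_on (closure \<Omega> \<times> {0..}) (unc u)"
      using sol by (simp add: neumann_solution_def)
    then have "continuous_on (closure \<Omega> \<times> {\<tau>..T}) (unc u)"
      by (rule continuous_on_subset) (use \<open>0 < \<tau>\<close> in auto)
    moreover have "continuous_on (closure \<Omega> \<times> {\<tau>..T}) (\<lambda>z. k (fst z))"
      by (rule continuous_on_compose2[OF continuous_barrier]) (auto intro: continuous_intros)
    ultimately show ?thesis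
      unfolding \<Psi>_def unc_def[abs_def] by (intro continuous_intros)
  qed
  ultimately obtain z0 where z0: "z0 \<in> closure \<Omega> \<times> {\<tau>..T}"
    and max: "\<And>z. z \<in> closure \<Omega> \<times> {\<tau>..T} \<Longrightarrow> \<Psi> z \<le> \<Psi> z0"
    using continuous_attains_sup[of "closure \<Omega> \<times> {\<tau>..T}" \<Psi>] x by blast
  obtain x0 t0 where z0_eq: "z0 = (x0, t0)"
    by fastforce
  have "t0 = \<tau>"
  proof (rule ccontr)
    assume "t0 \<noteq> \<tau>"
    with z0 z0_eq have "\<tau> < t0" "t0 \<le> T" "x0 \<in> closure \<Omega>"
      by auto
    have "u y s - \<epsilon> * k y - \<epsilon> * M * (s - \<tau>) \<le> u x0 t0 - \<epsilon> * k x0 - \<epsilon> * M * (t0 - \<tau>)"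
      if "y \<in> closure \<Omega>" "s \<in> {\<tau>..t0}" for y s
      using max[of "(y, s)"] that \<open>t0 \<le> T\<close> by (simp add: \<Psi>_def z0_eq)
    moreover have "barrier_flux_div \<alpha> y t0 \<le> L"
      if "y \<in> closure \<Omega>" for y
      using L[OF that] \<open>\<tau> < t0\<close> \<open>t0 \<le> T\<close> by simp
    ultimately show False
      using perturbed_max_not_after_initial_time[OF sol \<alpha> \<alpha>_pos _ \<open>L < M\<close> \<open>0 < \<epsilon>\<close> _ \<open>\<tau> < t0\<close> \<open>x0 \<in> closure \<Omega>\<close>]
        \<open>0 < \<tau>\<close> by simp
  qed
  show ?thesis
  proof (rule that)
    show "x0 \<in> closure \<Omega>"
      using z0 z0_eq by simp
    show "u x t - \<epsilon> * k x - \<epsilon> * M * (t - \<tau>) \<le> u x0 \<tau> - \<epsilon> * k x0"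
      using max[of "(x, t)"] x \<open>t0 = \<tau>\<close> by (simp add: \<Psi>_def z0_eq)
  qed
qed

lemma max_principle_strip:
  assumes sol: "neumann_solution \<Omega> N \<alpha> u" and \<alpha>: "C1_on (unc \<alpha>) (closure \<Omega> \<times> {0<..})"
    and \<alpha>_pos: "\<And>x t. x \<in> \<Omega> \<Longrightarrow> 0 < t \<Longrightarrow> 0 < \<alpha> x t"
    and "0 < \<tau>" and init: "\<And>y. y \<in> closure \<Omega> \<Longrightarrow> u y \<tau> \<le> \<delta>"
    and x: "x \<in> closure \<Omega>" "t \<in> {\<tau>..T}"
  shows "u x t \<le> \<delta>"
proof -
  obtain L where L: "\<And>x t. x \<in> closure \<Omega> \<Longrightarrow> t \<in> {\<tau>..T} \<Longrightarrow>
      barrier_flux_div \<alpha> x t \<le> L"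
    using barrier_flux_bounded[OF \<alpha> \<open>0 < \<tau>\<close>] by blast
  have "bounded (k ` closure \<Omega>)"
    using bounded_domain
    by (intro compact_imp_bounded compact_continuous_image continuous_on_subset[OF continuous_barrier])
      (auto simp: compact_closure)
  then obtain K where K: "\<And>y. y \<in> closure \<Omega> \<Longrightarrow> \<bar>k y\<bar> \<le> K"
    by (auto simp: bounded_iff)
  define M where "M = \<bar>L\<bar> + 1"
  define c where "c = 2 * K + M * (T - \<tau>)"
  have "L < M"
    by (simp add: M_def)
  have "u x t \<le> \<delta> + \<epsilon> * c" if "0 < \<epsilon>" for \<epsilon>
  proof -
    obtain x0 where "x0 \<in> closure \<Omega>" and "u x t - \<epsilon> * k x - \<epsilon> * M * (t - \<tau>) \<le> u x0 \<tau> - \<epsilon> * k x0"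
      using perturbed_max_at_initial_time[OF sol \<alpha> \<alpha>_pos L \<open>L < M\<close> \<open>0 < \<epsilon>\<close> \<open>0 < \<tau>\<close> x] by blast
    moreover have "\<epsilon> * k x \<le> \<epsilon> * K" "\<epsilon> * (- k x0) \<le> \<epsilon> * K"
      using K[OF x(1)] K[OF \<open>x0 \<in> closure \<Omega>\<close>] \<open>0 < \<epsilon>\<close> by (intro mult_left_mono; auto simp: abs_le_iff)+
    moreover have "\<epsilon> * M * (t - \<tau>) \<le> \<epsilon> * M * (T - \<tau>)"
      using x(2) \<open>0 < \<epsilon>\<close> by (intro mult_left_mono) (auto simp: M_def)
    ultimately show ?thesis
      using init[OF \<open>x0 \<in> closure \<Omega>\<close>] by (simp add: c_def algebra_simps)
  qed
  then have "\<forall>\<^sub>F \<epsilon> in at_right 0. u x t \<le> \<delta> + \<epsilon> * c"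
    by (rule eventually_mono[OF eventually_at_right_less])
  moreover have "((\<lambda>\<epsilon>. \<delta> + \<epsilon> * c) \<longlongrightarrow> \<delta>) (at_right 0)"
    by (auto intro!: tendsto_eq_intros)
  ultimately show ?thesis
    by (intro tendsto_lowerbound[OF _ _ trivial_limit_at_right_real])
qed

lemma max_principle:
  assumes sol: "neumann_solution \<Omega> N \<alpha> u" and \<alpha>: "C1_on (unc \<alpha>) (closure \<Omega> \<times> {0<..})"
    and \<alpha>_pos: "\<And>x t. x \<in> \<Omega> \<Longrightarrow> 0 < t \<Longrightarrow> 0 < \<alpha> x t"
    and init: "\<And>x. x \<in> \<Omega> \<Longrightarrow> u x 0 \<le> 0" and "x \<in> \<Omega>" "0 < t"
  shows "u x t \<le> 0"
proof (rule field_le_epsilon)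
  fix \<delta> :: real assume "0 < \<delta>"
  let ?K = "closure \<Omega> \<times> {0..t}"
  have "continuous_on (closure \<Omega> \<times> {0..}) (unc u)"
    using sol by (simp add: neumann_solution_def)
  then have cont: "continuous_on ?K (unc u)"
    by (rule continuous_on_subset) auto
  moreover have "compact ?K"
    using bounded_domain by (simp add: compact_Times compact_closure)
  ultimately obtain d where "0 < d"
    and d: "\<And>z z'. z \<in> ?K \<Longrightarrow> z' \<in> ?K \<Longrightarrow> dist z' z < d \<Longrightarrow> dist (unc u z') (unc u z) < \<delta>"
    using compact_uniformly_continuous \<open>0 < \<delta>\<close> unfolding uniformly_continuous_on_def by metis
  have "continuous_on (closure \<Omega>) (\<lambda>y. unc u (y, 0))"
    by (rule continuous_on_compose2[OF cont]) (use \<open>0 < t\<close> in \<open>auto intro!: continuous_intros\<close>)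
  then have init_closure: "u y 0 \<le> 0" if "y \<in> closure \<Omega>" for y
    using continuous_le_on_closure[OF _ that init] by (simp add: unc_def)
  define \<tau> where "\<tau> = min t (d / 2)"
  have "0 < \<tau>" "\<tau> \<le> t" "\<tau> < d"
    using \<open>0 < t\<close> \<open>0 < d\<close> by (auto simp: \<tau>_def)
  have "u y \<tau> \<le> \<delta>" if "y \<in> closure \<Omega>" for y
  proof -
    have "dist (unc u (y, \<tau>)) (unc u (y, 0)) < \<delta>"
      using d[of "(y, 0)" "(y, \<tau>)"] that \<open>0 < \<tau>\<close> \<open>\<tau> \<le> t\<close> \<open>\<tau> < d\<close> \<open>0 < t\<close>
      by (simp add: dist_Pair_Pair dist_real_def)
    then show ?thesis
      using init_closure[OF that] by (simp add: unc_def dist_real_def)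
  qed
  then have "u x t \<le> \<delta>"
    using closure_subset \<open>x \<in> \<Omega>\<close> \<open>\<tau> \<le> t\<close>
    by (intro max_principle_strip[OF sol \<alpha> \<alpha>_pos \<open>0 < \<tau>\<close>, of \<delta> x t t]) auto
  then show "u x t \<le> 0 + \<delta>"
    by simp
qed

lemma neumann_solution_unique:
  assumes sol: "neumann_solution \<Omega> N \<alpha> u" and \<alpha>: "C1_on (unc \<alpha>) (closure \<Omega> \<times> {0<..})"
    and \<alpha>_pos: "\<And>x t. x \<in> \<Omega> \<Longrightarrow> 0 < t \<Longrightarrow> 0 < \<alpha> x t"
    and init: "\<And>x. x \<in> \<Omega> \<Longrightarrow> u x 0 = 0" and "x \<in> \<Omega>" "0 \<le> t"
  shows "u x t = 0"
proof (cases "t = 0")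
  case False
  then have "0 < t"
    using \<open>0 \<le> t\<close> by simp
  have "u y 0 \<le> 0" "- u y 0 \<le> 0" if "y \<in> \<Omega>" for y
    using init[OF that] by simp_all
  then have "u x t \<le> 0" "- u x t \<le> 0"
    using max_principle[OF sol \<alpha> \<alpha>_pos _ \<open>x \<in> \<Omega>\<close> \<open>0 < t\<close>]
      max_principle[OF neumann_solution_uminus[OF open_domain sol] \<alpha> \<alpha>_pos _ \<open>x \<in> \<Omega>\<close> \<open>0 < t\<close>]
    by blast+
  then show ?thesis
    by simp
qed (use init \<open>x \<in> \<Omega>\<close> in simp)

end

section \<open>The tracking error\<close>

locale feedback_tracking =
  fixes \<Omega> :: "'a::euclidean_space set" and g :: "'a \<Rightarrow> real" and a :: real
    and \<sigma> \<alpha> p pr :: "'a \<Rightarrow> real \<Rightarrow> real" and v vr :: "'a \<Rightarrow> real \<Rightarrow> 'a"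
  assumes domain: "C1_domain \<Omega> g"
    and coeff_lower: "0 < a" "\<And>x t. x \<in> \<Omega> \<Longrightarrow> 0 \<le> t \<Longrightarrow> a \<le> \<alpha> x t"
    and reg_p: "C1_on (unc p) (closure \<Omega> \<times> {0<..})"
      "C1_on (\<lambda>z. grad (\<lambda>y. p y (snd z)) (fst z)) (closure \<Omega> \<times> {0<..})"
      "continuous_on (closure \<Omega> \<times> {0..}) (unc p)"
    and reg_pr: "C1_on (unc pr) (closure \<Omega> \<times> {0<..})"
      "C1_on (\<lambda>z. grad (\<lambda>y. pr y (snd z)) (fst z)) (closure \<Omega> \<times> {0<..})"
      "continuous_on (closure \<Omega> \<times> {0..}) (unc pr)"
    and reg_\<sigma>: "C1_on (unc \<sigma>) (closure \<Omega> \<times> {0<..})"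
      "C1_on (\<lambda>z. grad (\<lambda>y. \<sigma> y (snd z)) (fst z)) (closure \<Omega> \<times> {0<..})"
    and reg_\<alpha>: "C1_on (unc \<alpha>) (closure \<Omega> \<times> {0<..})"
    and reg_v: "C1_on (unc v) (closure \<Omega> \<times> {0<..})"
    and reg_vr: "C1_on (unc vr) (closure \<Omega> \<times> {0<..})"
    and ref_pde: "\<And>x t. x \<in> \<Omega> \<Longrightarrow> 0 < t \<Longrightarrow>
      ((\<lambda>s. pr x s) has_real_derivative - divg (\<lambda>y. pr y t *\<^sub>R vr y t) x) (at t)"
    and ref_bc: "\<And>x t. x \<in> frontier \<Omega> \<Longrightarrow> 0 < t \<Longrightarrow> (pr x t *\<^sub>R vr x t) \<bullet> unit_normal g x = 0"
    and fp_pde: "\<And>x t. x \<in> \<Omega> \<Longrightarrow> 0 < t \<Longrightarrow> ((\<lambda>s. p x s) has_real_derivative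
      - divg (\<lambda>y. p y t *\<^sub>R v y t) x + lap (\<lambda>y. \<sigma> y t * p y t) x) (at t)"
    and fp_bc: "\<And>x t. x \<in> frontier \<Omega> \<Longrightarrow> 0 < t \<Longrightarrow>
      unit_normal g x \<bullet> (grad (\<lambda>y. \<sigma> y t * p y t) x - p x t *\<^sub>R v x t) = 0"
    and feedback: "\<And>x t. x \<in> \<Omega> \<Longrightarrow> 0 < t \<Longrightarrow> v x t =
      - ((\<alpha> x t *\<^sub>R grad (\<lambda>y. p y t - pr y t) x - grad (\<lambda>y. \<sigma> y t * p y t) x
          - pr x t *\<^sub>R vr x t) /\<^sub>R p x t)"
    and pos: "\<And>x t. x \<in> \<Omega> \<Longrightarrow> 0 < t \<Longrightarrow> 0 < p x t"
begin

lemma open_domain: "open \<Omega>"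
  by (rule C1_domain_open[OF domain])

lemma coeff_pos: "x \<in> \<Omega> \<Longrightarrow> 0 < t \<Longrightarrow> 0 < \<alpha> x t"
  using coeff_lower(1) coeff_lower(2)[of x t] by simp

lemma slices_differentiable:
  assumes "x \<in> closure \<Omega>" "0 < t"
  shows "(\<lambda>y. p y t) differentiable (at x)" "(\<lambda>y. pr y t) differentiable (at x)"
    "(\<lambda>y. \<sigma> y t) differentiable (at x)" "(\<lambda>y. \<alpha> y t) differentiable (at x)"
    "(\<lambda>y. v y t) differentiable (at x)" "(\<lambda>y. vr y t) differentiable (at x)"
    "(\<lambda>y. grad (\<lambda>y. p y t) y) differentiable (at x)"
    "(\<lambda>y. grad (\<lambda>y. pr y t) y) differentiable (at x)"
    "(\<lambda>y. grad (\<lambda>y. \<sigma> y t) y) differentiable (at x)"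
  using C1_on_slice_differentiable[OF reg_p(1) assms] C1_on_slice_differentiable[OF reg_pr(1) assms]
    C1_on_slice_differentiable[OF reg_\<sigma>(1) assms] C1_on_slice_differentiable[OF reg_\<alpha> assms]
    C1_on_slice_differentiable[OF reg_v assms] C1_on_slice_differentiable[OF reg_vr assms]
    C1_on_slice_differentiable[OF reg_p(2) assms] C1_on_slice_differentiable[OF reg_pr(2) assms]
    C1_on_slice_differentiable[OF reg_\<sigma>(2) assms]
  by (simp_all add: unc_def)

lemma grad_tracking_error:
  assumes "x \<in> closure \<Omega>" "0 < t"
  shows "grad (\<lambda>y. p y t - pr y t) x = grad (\<lambda>y. p y t) x - grad (\<lambda>y. pr y t) x"
  by (rule grad_diff[OF slices_differentiable(1,2)[OF assms]])

lemma grad_diffusion: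
  assumes "x \<in> closure \<Omega>" "0 < t"
  shows "grad (\<lambda>y. \<sigma> y t * p y t) x = \<sigma> x t *\<^sub>R grad (\<lambda>y. p y t) x + p x t *\<^sub>R grad (\<lambda>y. \<sigma> y t) x"
  by (rule grad_mult[OF slices_differentiable(3,1)[OF assms]])

text \<open>The feedback law only holds where \<open>p > 0\<close>, i.e. in \<open>\<Omega>\<close>; by continuity of both sides
  the resulting expression for the flux \<open>p v\<close> extends to the boundary.\<close>

lemma closed_loop_flux:
  assumes "x \<in> closure \<Omega>" "0 < t"
  shows "p x t *\<^sub>R v x t
    = pr x t *\<^sub>R vr x t + grad (\<lambda>y. \<sigma> y t * p y t) x - \<alpha> x t *\<^sub>R grad (\<lambda>y. p y t - pr y t) x"
proof -
  define E where "E y = pr y t *\<^sub>R vr y t + (\<sigma> y t *\<^sub>R grad (\<lambda>y. p y t) y + p y t *\<^sub>R grad (\<lambda>y. \<sigma> y t) y)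
    - \<alpha> y t *\<^sub>R (grad (\<lambda>y. p y t) y - grad (\<lambda>y. pr y t) y)" for y
  have E: "E y = pr y t *\<^sub>R vr y t + grad (\<lambda>y. \<sigma> y t * p y t) y - \<alpha> y t *\<^sub>R grad (\<lambda>y. p y t - pr y t) y"
    if "y \<in> closure \<Omega>" for y
    using grad_tracking_error[OF that \<open>0 < t\<close>] grad_diffusion[OF that \<open>0 < t\<close>] by (simp add: E_def)
  have "continuous_on (closure \<Omega>) (\<lambda>y. p y t *\<^sub>R v y t - E y)"
  proof (intro continuous_at_imp_continuous_on ballI)
    fix y assume "y \<in> closure \<Omega>"
    note diff = slices_differentiable[OF this \<open>0 < t\<close>, THEN differentiable_imp_continuous_within]
    show "isCont (\<lambda>y. p y t *\<^sub>R v y t - E y) y"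
      unfolding E_def by (intro continuous_intros diff)
  qed
  moreover have "p y t *\<^sub>R v y t - E y = 0" if "y \<in> \<Omega>" for y
  proof -
    have "p y t *\<^sub>R v y t = - (\<alpha> y t *\<^sub>R grad (\<lambda>y. p y t - pr y t) y - grad (\<lambda>y. \<sigma> y t * p y t) y
        - pr y t *\<^sub>R vr y t)"
      using feedback[OF that \<open>0 < t\<close>] pos[OF that \<open>0 < t\<close>] by simp
    then show ?thesis
      using E[OF closure_subset[THEN subsetD, OF that]] by (simp add: algebra_simps) (metis add_right_cancel)
  qed
  ultimately have "p x t *\<^sub>R v x t - E x = 0"
    using continuous_constant_on_closure[OF _ _ \<open>x \<in> closure \<Omega>\<close>] by blast
  then show ?thesis
    using E[OF \<open>x \<in> closure \<Omega>\<close>] by simp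
qed

lemma tracking_error_pde:
  assumes "x \<in> \<Omega>" "0 < t"
  shows "(\<lambda>y. \<alpha> y t *\<^sub>R grad (\<lambda>y. p y t - pr y t) y) differentiable (at x)" (is "?A differentiable _")
    and "((\<lambda>s. p x s - pr x s) has_real_derivative divg (\<lambda>y. \<alpha> y t *\<^sub>R grad (\<lambda>y. p y t - pr y t) y) x) (at t)"
proof -
  let ?S = "\<lambda>y. grad (\<lambda>y. \<sigma> y t * p y t) y" and ?R = "\<lambda>y. pr y t *\<^sub>R vr y t"
  have x: "x \<in> closure \<Omega>"
    using assms closure_subset by blast
  note diff = slices_differentiable[OF x \<open>0 < t\<close>]
  have cl: "y \<in> closure \<Omega>" if "y \<in> \<Omega>" for y
    using that closure_subset by blast
  have "(\<lambda>y. \<alpha> y t *\<^sub>R (grad (\<lambda>y. p y t) y - grad (\<lambda>y. pr y t) y)) differentiable (at x)"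
    using diff(4,7,8) by (intro differentiable_scaleR differentiable_diff)
  then show A: "?A differentiable (at x)"
    by (rule differentiable_transform_open[OF _ open_domain \<open>x \<in> \<Omega>\<close>])
      (simp add: grad_tracking_error[OF cl \<open>0 < t\<close>])
  have "(\<lambda>y. \<sigma> y t *\<^sub>R grad (\<lambda>y. p y t) y + p y t *\<^sub>R grad (\<lambda>y. \<sigma> y t) y) differentiable (at x)"
    using diff(1,3,7,9) by (intro differentiable_scaleR differentiable_add)
  then have S: "?S differentiable (at x)"
    by (rule differentiable_transform_open[OF _ open_domain \<open>x \<in> \<Omega>\<close>])
      (simp add: grad_diffusion[OF cl \<open>0 < t\<close>])
  have R: "?R differentiable (at x)"
    using diff(2,6) by (rule differentiable_scaleR)
  have "divg (\<lambda>y. p y t *\<^sub>R v y t) x = divg (\<lambda>y. ?R y + ?S y - ?A y) x"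
    using closed_loop_flux[OF cl \<open>0 < t\<close>] by (intro divg_cong_open[OF open_domain \<open>x \<in> \<Omega>\<close>]) simp
  also have "\<dots> = divg ?R x + divg ?S x - divg ?A x"
    using A S R by (simp add: divg_diff divg_add differentiable_add)
  finally have "- divg (\<lambda>y. p y t *\<^sub>R v y t) x + lap (\<lambda>y. \<sigma> y t * p y t) x = divg ?A x - divg ?R x"
    by (simp add: lap_def)
  with fp_pde[OF assms] have "((\<lambda>s. p x s) has_real_derivative divg ?A x - divg ?R x) (at t)"
    by simp
  from DERIV_diff[OF this ref_pde[OF assms]]
  show "((\<lambda>s. p x s - pr x s) has_real_derivative divg ?A x) (at t)"
    by simp
qed

lemma tracking_error_neumann_bc:
  assumes "x \<in> frontier \<Omega>" "0 < t"
  shows "grad (\<lambda>y. p y t - pr y t) x \<bullet> grad g x = 0"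
proof -
  let ?n = "unit_normal g x" and ?G = "grad (\<lambda>y. p y t - pr y t) x"
  have x: "x \<in> closure \<Omega>"
    using assms by (simp add: frontier_def)
  have "continuous_on (closure \<Omega>) (\<lambda>y. \<alpha> y t)"
  proof (intro continuous_at_imp_continuous_on ballI)
    fix y assume "y \<in> closure \<Omega>"
    show "isCont (\<lambda>y. \<alpha> y t) y"
      by (rule differentiable_imp_continuous_within[OF slices_differentiable(4)[OF \<open>y \<in> closure \<Omega>\<close> \<open>0 < t\<close>]])
  qed
  then have "a \<le> \<alpha> x t"
    by (rule continuous_ge_on_closure[OF _ x]) (use coeff_lower(2) \<open>0 < t\<close> in simp)
  then have "0 < \<alpha> x t"
    using coeff_lower(1) by linarith
  have "grad (\<lambda>y. \<sigma> y t * p y t) x - p x t *\<^sub>R v x t = \<alpha> x t *\<^sub>R ?G - pr x t *\<^sub>R vr x t"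
    using closed_loop_flux[OF x \<open>0 < t\<close>] by simp
  then have "?n \<bullet> (\<alpha> x t *\<^sub>R ?G - pr x t *\<^sub>R vr x t) = 0"
    using fp_bc[OF assms] by simp
  then have "\<alpha> x t * (?n \<bullet> ?G) = 0"
    using ref_bc[OF assms] by (simp add: inner_diff_right inner_commute)
  then have "(grad g x \<bullet> ?G) / norm (grad g x) = 0"
    using \<open>0 < \<alpha> x t\<close> by (auto simp: unit_normal_def)
  moreover have "grad g x \<noteq> 0"
    using domain C1_domain_frontier[OF domain \<open>x \<in> frontier \<Omega>\<close>] by (simp add: C1_domain_def)
  ultimately show ?thesis
    by (simp add: inner_commute)
qed

lemma tracking_error_neumann_solution:
  "neumann_solution \<Omega> (grad g) \<alpha> (\<lambda>x t. p x t - pr x t)"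
proof -
  have "continuous_on (closure \<Omega> \<times> {0..}) (unc (\<lambda>x t. p x t - pr x t))"
    using reg_p(3) reg_pr(3) by (simp add: unc_def[abs_def] continuous_on_diff)
  moreover have "(\<lambda>y. p y t - pr y t) differentiable (at x)" if "x \<in> closure \<Omega>" "0 < t" for x t
    using slices_differentiable(1,2)[OF that] by (rule differentiable_diff)
  ultimately show ?thesis
    using tracking_error_pde tracking_error_neumann_bc by (simp add: neumann_solution_def)
qed

end

theorem theorem1:
  fixes \<Omega> :: "'a::euclidean_space set"
    and g :: "'a \<Rightarrow> real"
    and p0 :: "'a \<Rightarrow> real"
    and \<sigma> \<alpha> p pr :: "'a \<Rightarrow> real \<Rightarrow> real"
    and v vr :: "'a \<Rightarrow> real \<Rightarrow> 'a"
  assumes dom: "open \<Omega>" "bounded \<Omega>" "connected \<Omega>" "C1_domain \<Omega> g"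
    and p0_density: "\<forall>x\<in>\<Omega>. 0 \<le> p0 x" "p0 integrable_on \<Omega>" "integral \<Omega> p0 = 1"
    and \<alpha>_inf: "\<exists>a>0. \<forall>x\<in>\<Omega>. \<forall>t\<ge>0. a \<le> \<alpha> x t"
    and \<alpha>_sup: "\<exists>b. \<forall>x\<in>\<Omega>. \<forall>t\<ge>0. \<alpha> x t \<le> b"
    \<comment> \<open>classical regularity: C^{2,1} on closure(Omega) x (0,oo), continuous up to t = 0\<close>
    and reg_p: "C1_on (unc p) (closure \<Omega> \<times> {0<..})"
               "C1_on (\<lambda>z. grad (\<lambda>y. p y (snd z)) (fst z)) (closure \<Omega> \<times> {0<..})"
               "continuous_on (closure \<Omega> \<times> {0..}) (unc p)"
    and reg_pr: "C1_on (unc pr) (closure \<Omega> \<times> {0<..})"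
               "C1_on (\<lambda>z. grad (\<lambda>y. pr y (snd z)) (fst z)) (closure \<Omega> \<times> {0<..})"
               "continuous_on (closure \<Omega> \<times> {0..}) (unc pr)"
    and reg_\<sigma>: "C1_on (unc \<sigma>) (closure \<Omega> \<times> {0<..})"
               "C1_on (\<lambda>z. grad (\<lambda>y. \<sigma> y (snd z)) (fst z)) (closure \<Omega> \<times> {0<..})"
    and reg_\<alpha>: "C1_on (unc \<alpha>) (closure \<Omega> \<times> {0<..})"
    and reg_v: "C1_on (unc v) (closure \<Omega> \<times> {0<..})"
    and reg_vr: "C1_on (unc vr) (closure \<Omega> \<times> {0<..})"
    \<comment> \<open>reference pair (p_r, v_r)\<close>
    and ref_pde: "\<forall>x\<in>\<Omega>. \<forall>t>0. ((\<lambda>s. pr x s) has_real_derivative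
                    - divg (\<lambda>y. pr y t *\<^sub>R vr y t) x) (at t)"
    and ref_init: "\<forall>x\<in>\<Omega>. pr x 0 = p0 x"
    and ref_bc: "\<forall>x\<in>frontier \<Omega>. \<forall>t>0. (pr x t *\<^sub>R vr x t) \<bullet> unit_normal g x = 0"
    \<comment> \<open>Fokker--Planck system\<close>
    and fp_pde: "\<forall>x\<in>\<Omega>. \<forall>t>0. ((\<lambda>s. p x s) has_real_derivative
                    - divg (\<lambda>y. p y t *\<^sub>R v y t) x + lap (\<lambda>y. \<sigma> y t * p y t) x) (at t)"
    and fp_init: "\<forall>x\<in>\<Omega>. p x 0 = p0 x"
    and fp_bc: "\<forall>x\<in>frontier \<Omega>. \<forall>t>0.
                  unit_normal g x \<bullet> (grad (\<lambda>y. \<sigma> y t * p y t) x - p x t *\<^sub>R v x t) = 0"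
    \<comment> \<open>feedback law\<close>
    and feedback: "\<forall>x\<in>\<Omega>. \<forall>t>0. v x t =
                  - ((\<alpha> x t *\<^sub>R grad (\<lambda>y. p y t - pr y t) x - grad (\<lambda>y. \<sigma> y t * p y t) x
                      - pr x t *\<^sub>R vr x t) /\<^sub>R p x t)"
    and pos: "\<forall>x\<in>\<Omega>. \<forall>t>0. p x t > 0"
  shows "\<exists>C r. r > 0 \<and> (\<forall>t\<ge>0. L2norm \<Omega> (\<lambda>x. p x t - pr x t) \<le> C * exp (- r * t))"
proof -
  obtain a where "0 < a" and a: "\<forall>x\<in>\<Omega>. \<forall>t\<ge>0. a \<le> \<alpha> x t"
    using \<alpha>_inf by blast
  interpret feedback_tracking \<Omega> g a \<sigma> \<alpha> p pr v vr
    by unfold_locales (fact dom(4) \<open>0 < a\<close> a[rule_format] reg_p reg_pr reg_\<sigma> reg_\<alpha> reg_v reg_vr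
        ref_pde[rule_format] ref_bc[rule_format] fp_pde[rule_format] fp_bc[rule_format]
        feedback[rule_format] pos[rule_format])+
  obtain k kd kdd C where barrier: "neumann_barrier \<Omega> (grad g) k kd kdd C"
    using C1_domain_neumann_barrier[OF dom(2,4)] by blast
  have init: "p x 0 - pr x 0 = 0" if "x \<in> \<Omega>" for x
    using fp_init ref_init that by simp
  have "p x t - pr x t = 0" if "x \<in> \<Omega>" "0 \<le> t" for x t
    by (rule neumann_barrier.neumann_solution_unique[OF barrier tracking_error_neumann_solution reg_\<alpha>
          coeff_pos init that])
  then have "L2norm \<Omega> (\<lambda>x. p x t - pr x t) = 0" if "0 \<le> t" for t
    using that by (simp add: L2norm_def integral_cong[of \<Omega> "\<lambda>x. (p x t - pr x t)\<^sup>2" "\<lambda>x. 0"])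
  then show ?thesis
    by (intro exI[of _ 0] exI[of _ 1]) simp
qed

end
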